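(* Let $k\ge0$, $\hat y\in Y$, and $\bar\lambda_k=\lambda+\frac{2\tau_k\mathsf D^k}{k!}\mathbb 1\{k\ge1\}$. Assume: (i) $\nabla_x f$ exists and $\|\nabla_x f(x',y')-\nabla_x f(x,y)\|\le\lambda\|x'-x\|+\mu\|y'-y\|$ for all $x,x'\in X$, $y,y'\in Y$; (ii) $\nabla^k_{y\cdots y}f$ exists and $\|\nabla^k_{y\cdots y}f(x',y')-\nabla^k_{y\cdots y}f(x,y)\|\le\rho_k\|y'-y\|+\sigma_k\|x'-x\|$ (possibly with $\rho_k=\infty$), and $\nabla^k_{y\cdots y}f(\cdot,y)$ is absolutely continuous for every $y$; (iii) if $k\ge1$: $\nabla^{k+1}_{xy\cdots y}f$ exists with $\|\nabla^{k+1}_{xy\cdots y}f(x',y)-\nabla^{k+1}_{xy\cdots y}f(x,y)\|\le\tau_k\|x'-x\|$, the set $\{(x,y):x\in X,y\in Y'_x\}$ is Lebesgue measurable where $Y'_x$ is the set of $y$ at which $\nabla^{k+2}_{xxy\cdots y}f(x,y)$ does not exist, and $\nabla^k_{y\cdots y}f(x,\cdot)$ is continuous for every $x$. Then for any $x^*\in X$ with $\|\nabla\hat\varphi_{2\bar\lambda_k}(x^* )\|\le\varepsilon$, $$\|\nabla\varphi_{2\bar\lambda_k}(x^* )-\nabla\hat\varphi_{2\bar\lambda_k}(x^* )\|\le\begin{cases}4\Big(\mu\mathsf D+\dfrac{2\sigma_k\mathsf D^k}{k!}+\varepsilon\Big)&\text{when }k\ge1,\\[4pt] 4\big(\min\{\mu\mathsf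 D,2\sigma_0\}+\varepsilon\big)&\text{when }k=0.\end{cases}$$
   Context: Let $E_x,E_y$ be finite-dimensional Euclidean spaces with Euclidean norms; for tensors $\|\cdot\|$ is the induced operator norm. Let $X\subseteq E_x$, $Y\subseteq E_y$ be convex with nonempty interior, $Y$ compact, $\mathsf D\ge\mathrm{diam}(Y)$, $f:X\times Y\to\mathbb R$. $\nabla^j_{y\cdots y}f$ denotes the tensor of $j$-th order partial derivatives in $y$, and $\nabla^{k+1}_{xy\cdots y}f$, $\nabla^{k+2}_{xxy\cdots y}f$ those with additionally one, resp. two, derivatives in $x$. For $\hat y\in Y$, $\hat f_k(x,y)=\sum_{j=0}^k\frac1{j!}\nabla^j_{y\cdots y}f(x,\hat y)[(y-\hat y)^j]$ ($T[v^j]=T[v,\dots,v]$). Primal functions: $\varphi(x)=\max_{y\in Y}f(x,y)$, $\hat\varphi(x)=\max_{y\in Y}\hat f_k(x,y)$. For a function $\phi:X\to\mathbb R$ that is $c$-weakly convex ($\phi+\frac c2\|\cdot\|^2$ convex) with $c<\bar\lambda$, the Moreau envelope is $\phi_{\bar\lambda}(x)=\min_{u\in X}\{\phi(u)+\frac{\bar\lambda}2\|u-x\|^2\}$, which is differentiable. *)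

theory Defs
  imports "HOL-Analysis.Analysis"
begin

text \<open>A j-linear form on E_y (a tensor of order j) is represented as a function of a
list of j vectors.\<close>
definition tnorm :: "nat \<Rightarrow> ('b::real_normed_vector list \<Rightarrow> real) \<Rightarrow> real" where
  "tnorm j T = (SUP vs \<in> {vs. length vs = j \<and> (\<forall>v\<in>set vs. norm v \<le> 1)}. \<bar>T vs\<bar>)"

definition tnorm_x :: "nat \<Rightarrow> ('a::real_normed_vector \<Rightarrow> 'b::real_normed_vector list \<Rightarrow> real) \<Rightarrow> real" where
  "tnorm_x j T = (SUP p \<in> {(u, vs). norm u \<le> 1 \<and> length vs = j \<and> (\<forall>v\<in>set vs. norm v \<le> 1)}.
                     \<bar>T (fst p) (snd p)\<bar>)"

definition abs_cont_on :: "real set \<Rightarrow> (real \<Rightarrow> real) \<Rightarrow> bool" where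
  "abs_cont_on S g \<longleftrightarrow> (\<forall>e>0. \<exists>d>0. \<forall>n (a::nat \<Rightarrow> real) b.
      (\<forall>i<n. a i \<in> S \<and> b i \<in> S \<and> a i \<le> b i \<and> {a i..b i} \<subseteq> S) \<and>
      (\<forall>i<n. \<forall>j<n. i \<noteq> j \<longrightarrow> b i \<le> a j \<or> b j \<le> a i) \<and>
      (\<Sum>i<n. b i - a i) < d \<longrightarrow> (\<Sum>i<n. \<bar>g (b i) - g (a i)\<bar>) < e)"

text \<open>Absolute continuity of a tensor-valued function on a convex set X of the
multi-dimensional space E_x: along every segment in X, every component is absolutely
continuous.\<close>
definition tensor_abs_cont_on :: "'a::real_normed_vector set \<Rightarrow> ('a \<Rightarrow> 'c \<Rightarrow> real) \<Rightarrow> bool" where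
  "tensor_abs_cont_on X T \<longleftrightarrow> (\<forall>x\<in>X. \<forall>x'\<in>X. \<forall>vs.
      abs_cont_on {0..1} (\<lambda>t. T (x + t *\<^sub>R (x' - x)) vs))"

definition grad :: "('a::real_inner \<Rightarrow> real) \<Rightarrow> 'a \<Rightarrow> 'a" where
  "grad F x = (SOME g. (F has_derivative (\<lambda>h. g \<bullet> h)) (at x))"

definition moreau :: "('a::real_normed_vector \<Rightarrow> real) \<Rightarrow> 'a set \<Rightarrow> real \<Rightarrow> 'a \<Rightarrow> real" where
  "moreau phi X lb x = (INF u\<in>X. phi u + lb / 2 * (norm (u - x))\<^sup>2)"

end

theory Submission
  imports Defs
begin

(*
  Both primal functions are weakly convex with modulus lam_bar: phi as a supremum of the
  lam-weakly convex functions f(., y), and phi_hat because f(., y) - f_hat(., y) is a Taylor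
  remainder in y whose deviation from affinity along segments in x is controlled by the
  tau-Lipschitz mixed derivative of order k + 1.

  For a lam_bar-weakly convex psi, the objective psi u + lam_bar * norm (u - x)^2 of the Moreau
  envelope grows quadratically around the proximal point p of x, and the envelope is
  differentiable with gradient 2 lam_bar (x - p). Testing the growth of each of two envelopes
  at the other's proximal point shows that their gradients differ by at most twice the
  Lipschitz constant of psi1 - psi2.

  Finally phi - phi_hat is Lipschitz with constant 2 mu D + 2 sigma D^k / k! (for k = 0 also
  with min (mu D) (2 sigma)), by the Lipschitz gradient in x and the Taylor bound through the
  k-th derivative. The tolerance eps only matters when k = 0 and f(x, .) is unbounded: then
  phi is a constant junk value and its envelope has gradient zero.
*)

section \<open>Multilinear forms\<close>

definition multilinear :: "nat \<Rightarrow> ('a::real_vector list \<Rightarrow> real) \<Rightarrow> bool" where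
  "multilinear n T \<longleftrightarrow> (\<forall>vs i. length vs = n \<longrightarrow> i < n \<longrightarrow> linear (\<lambda>v. T (vs[i := v])))"

lemma multilinear_0 [simp]: "multilinear 0 T"
  by (simp add: multilinear_def)

lemma multilinear_Suc:
  "multilinear (Suc n) T \<longleftrightarrow>
     (\<forall>ws. length ws = n \<longrightarrow> linear (\<lambda>h. T (h # ws))) \<and> (\<forall>h. multilinear n (\<lambda>ws. T (h # ws)))"
proof
  assume T: "multilinear (Suc n) T"
  show "(\<forall>ws. length ws = n \<longrightarrow> linear (\<lambda>h. T (h # ws))) \<and> (\<forall>h. multilinear n (\<lambda>ws. T (h # ws)))"
  proof (intro conjI allI impI)
    fix ws :: "'a list" assume "length ws = n"
    then show "linear (\<lambda>h. T (h # ws))"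
      using T[unfolded multilinear_def, rule_format, of "undefined # ws" 0] by simp
  next
    fix h :: 'a
    show "multilinear n (\<lambda>ws. T (h # ws))"
      unfolding multilinear_def
      using T[unfolded multilinear_def, rule_format, of "h # _" "Suc _"] by simp
  qed
next
  assume T: "(\<forall>ws. length ws = n \<longrightarrow> linear (\<lambda>h. T (h # ws))) \<and> (\<forall>h. multilinear n (\<lambda>ws. T (h # ws)))"
  show "multilinear (Suc n) T"
    unfolding multilinear_def
  proof (intro allI impI)
    fix vs :: "'a list" and i assume len: "length vs = Suc n" "i < Suc n"
    then obtain h ws where vs: "vs = h # ws" "length ws = n" by (cases vs) auto
    show "linear (\<lambda>v. T (vs[i := v]))"
      using T vs len by (cases i) (auto simp: multilinear_def)
  qed
qed

lemma linear_real_cmul: "linear f \<Longrightarrow> linear (\<lambda>x. c * f x :: real)"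
  using linear_compose_scale_right[of f c] by simp

lemma multilinear_lincomb:
  assumes "multilinear n T" "multilinear n T'"
  shows "multilinear n (\<lambda>vs. a * T vs + b * T' vs)"
  using assms unfolding multilinear_def by (auto intro!: linear_compose_add linear_real_cmul)

lemma multilinear_scaleR_args:
  assumes "multilinear n T" "length vs = n"
  shows "T (map (\<lambda>v. c *\<^sub>R v) vs) = c ^ n * T vs"
  using assms
proof (induction n arbitrary: T vs)
  case (Suc n)
  then obtain h ws where vs: "vs = h # ws" "length ws = n" by (cases vs) auto
  have "linear (\<lambda>h. T (h # map (\<lambda>v. c *\<^sub>R v) ws))"
    using Suc.prems vs unfolding multilinear_Suc by simp
  then have "T (map (\<lambda>v. c *\<^sub>R v) vs) = c * T (h # map (\<lambda>v. c *\<^sub>R v) ws)"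
    using vs linear_scale[of "\<lambda>h. T (h # map (\<lambda>v. c *\<^sub>R v) ws)" c h] by simp
  also have "T (h # map (\<lambda>v. c *\<^sub>R v) ws) = c ^ n * T (h # ws)"
    using Suc.IH[of "\<lambda>ws. T (h # ws)" ws] Suc.prems vs unfolding multilinear_Suc by simp
  finally show ?case using vs by simp
qed simp

lemma multilinear_replicate_0:
  assumes "multilinear j T" "j \<ge> 1"
  shows "T (replicate j 0) = 0"
proof -
  obtain i where j: "j = Suc i" using assms(2) by (cases j) auto
  then have "linear (\<lambda>h. T (h # replicate i 0))"
    using assms(1) j multilinear_Suc[of i T] length_replicate[of i 0] by blast
  from linear_0[OF this] show ?thesis using j by simp
qed

lemma linear_functional_bound_Basis:
  fixes f :: "'a::euclidean_space \<Rightarrow> real"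
  assumes "linear f" "norm h \<le> 1" "\<And>b. b \<in> Basis \<Longrightarrow> \<bar>f b\<bar> \<le> B b"
  shows "\<bar>f h\<bar> \<le> (\<Sum>b\<in>Basis. B b)"
proof -
  have "f h = f (\<Sum>b\<in>Basis. (h \<bullet> b) *\<^sub>R b)"
    by (simp add: euclidean_representation)
  also have "\<dots> = (\<Sum>b\<in>Basis. (h \<bullet> b) * f b)"
    by (simp add: linear_sum[OF assms(1)] linear_scale[OF assms(1)])
  also have "\<bar>\<dots>\<bar> \<le> (\<Sum>b\<in>Basis. \<bar>h \<bullet> b\<bar> * \<bar>f b\<bar>)"
    by (metis (no_types, lifting) abs_mult sum.cong sum_abs)
  also have "\<dots> \<le> (\<Sum>b\<in>Basis. 1 * B b)"
    using Basis_le_norm[of _ h] assms(2,3) order_trans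
    by (intro sum_mono mult_mono) (auto, fastforce)
  finally show ?thesis by simp
qed

lemma multilinear_bounded:
  fixes T :: "'a::euclidean_space list \<Rightarrow> real"
  assumes "multilinear n T"
  shows "\<exists>B. \<forall>vs. length vs = n \<longrightarrow> (\<forall>v\<in>set vs. norm v \<le> 1) \<longrightarrow> \<bar>T vs\<bar> \<le> B"
  using assms
proof (induction n arbitrary: T)
  case 0
  then show ?case by (intro exI[of _ "\<bar>T []\<bar>"]) simp
next
  case (Suc n)
  have "\<forall>b. \<exists>B. \<forall>ws. length ws = n \<longrightarrow> (\<forall>v\<in>set ws. norm v \<le> 1) \<longrightarrow> \<bar>T (b # ws)\<bar> \<le> B"
    using Suc.IH Suc.prems unfolding multilinear_Suc by blast
  then obtain B where B: "\<And>b ws. length ws = n \<Longrightarrow> \<forall>v\<in>set ws. norm v \<le> 1 \<Longrightarrow> \<bar>T (b # ws)\<bar> \<le> B b"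
    by metis
  show ?case
  proof (intro exI[of _ "\<Sum>b\<in>Basis. B b"] allI impI)
    fix vs :: "'a list" assume "length vs = Suc n" "\<forall>v\<in>set vs. norm v \<le> 1"
    then obtain h ws where vs: "vs = h # ws" "length ws = n" "norm h \<le> 1" "\<forall>v\<in>set ws. norm v \<le> 1"
      by (cases vs) auto
    have "linear (\<lambda>h. T (h # ws))" using Suc.prems vs unfolding multilinear_Suc by simp
    then show "\<bar>T vs\<bar> \<le> (\<Sum>b\<in>Basis. B b)"
      using linear_functional_bound_Basis[of "\<lambda>h. T (h # ws)"] B vs by simp
  qed
qed

lemma tnorm_upper:
  fixes T :: "'a::euclidean_space list \<Rightarrow> real"
  assumes "multilinear n T" "length vs = n" "\<forall>v\<in>set vs. norm v \<le> 1"
  shows "\<bar>T vs\<bar> \<le> tnorm n T"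
proof -
  obtain B where "\<forall>vs. length vs = n \<longrightarrow> (\<forall>v\<in>set vs. norm v \<le> 1) \<longrightarrow> \<bar>T vs\<bar> \<le> B"
    using multilinear_bounded[OF assms(1)] by blast
  then have "bdd_above ((\<lambda>vs. \<bar>T vs\<bar>) ` {vs. length vs = n \<and> (\<forall>v\<in>set vs. norm v \<le> 1)})"
    by (intro bdd_aboveI2) auto
  then show ?thesis
    unfolding tnorm_def using assms(2,3) by (intro cSUP_upper) auto
qed

lemma tnorm_x_upper:
  fixes T :: "'a::euclidean_space \<Rightarrow> 'b::euclidean_space list \<Rightarrow> real"
  assumes lin: "\<And>vs. length vs = n \<Longrightarrow> linear (\<lambda>u. T u vs)" and ml: "\<And>u. multilinear n (T u)"
    and "norm u \<le> 1" "length vs = n" "\<forall>v\<in>set vs. norm v \<le> 1"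
  shows "\<bar>T u vs\<bar> \<le> tnorm_x n T"
proof -
  have "\<forall>b. \<exists>B. \<forall>vs. length vs = n \<longrightarrow> (\<forall>v\<in>set vs. norm v \<le> 1) \<longrightarrow> \<bar>T b vs\<bar> \<le> B"
    using multilinear_bounded[OF ml] by blast
  then obtain B where B: "\<And>b vs. length vs = n \<Longrightarrow> \<forall>v\<in>set vs. norm v \<le> 1 \<Longrightarrow> \<bar>T b vs\<bar> \<le> B b"
    by metis
  have "\<bar>T u' vs'\<bar> \<le> (\<Sum>b\<in>Basis. B b)"
    if "norm u' \<le> 1" "length vs' = n" "\<forall>v\<in>set vs'. norm v \<le> 1" for u' vs'
    using linear_functional_bound_Basis[OF lin[OF that(2)] that(1)] B that(2,3) by blast
  then have "bdd_above ((\<lambda>p. \<bar>T (fst p) (snd p)\<bar>) `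
      {(u, vs). norm u \<le> 1 \<and> length vs = n \<and> (\<forall>v\<in>set vs. norm v \<le> 1)})"
    by (intro bdd_aboveI2[where M="\<Sum>b\<in>Basis. B b"]) auto
  moreover have "(u, vs) \<in> {(u, vs). norm u \<le> 1 \<and> length vs = n \<and> (\<forall>v\<in>set vs. norm v \<le> 1)}"
    using assms(3-5) by simp
  ultimately show ?thesis
    unfolding tnorm_x_def by (metis (no_types, lifting) cSUP_upper fst_conv snd_conv)
qed

lemma multilinear_replicate_bound:
  fixes T :: "'a::real_normed_vector list \<Rightarrow> real"
  assumes T: "multilinear j T"
    and B: "\<And>vs. length vs = j \<Longrightarrow> \<forall>v\<in>set vs. norm v \<le> 1 \<Longrightarrow> \<bar>T vs\<bar> \<le> B"
  shows "\<bar>T (replicate j d)\<bar> \<le> B * norm d ^ j"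
proof (cases "d = 0")
  case True
  have "0 \<le> B" using B[of "replicate j 0"] by simp
  then show ?thesis
    using True multilinear_replicate_0[OF T] B[of "[]"] by (cases j) auto
next
  case False
  define e where "e = (1 / norm d) *\<^sub>R d"
  have "d = norm d *\<^sub>R e"
    using False by (simp add: e_def)
  then have "T (replicate j d) = T (map (\<lambda>v. norm d *\<^sub>R v) (replicate j e))"
    by (simp add: map_replicate)
  also have "\<dots> = norm d ^ j * T (replicate j e)"
    by (rule multilinear_scaleR_args[OF T]) simp
  finally have "T (replicate j d) = norm d ^ j * T (replicate j e)" .
  then have "\<bar>T (replicate j d)\<bar> = norm d ^ j * \<bar>T (replicate j e)\<bar>"
    by (simp add: abs_mult)
  also have "\<dots> \<le> norm d ^ j * B"
    using B[of "replicate j e"] False by (intro mult_left_mono) (auto simp: e_def)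
  finally show ?thesis by (simp add: mult.commute)
qed

section \<open>Derivatives along segments\<close>

lemma linepath_mem_convex: "convex S \<Longrightarrow> u \<in> S \<Longrightarrow> v \<in> S \<Longrightarrow> t \<in> {0..1} \<Longrightarrow> linepath u v t \<in> S"
  using closed_segment_subset linepath_in_path by blast

lemma has_real_derivative_linepath_within:
  fixes h :: "'a::real_normed_vector \<Rightarrow> real"
  assumes S: "convex S" "u \<in> S" "v \<in> S" and s: "s \<in> {0..1}"
    and h: "(h has_derivative H) (at (linepath u v s) within S)"
  shows "((\<lambda>t. h (linepath u v t)) has_real_derivative H (v - u)) (at s within {0..1})"
proof -
  have "linepath u v ` {0..1} \<subseteq> S" using linepath_mem_convex[OF S] by blast
  then have "((h \<circ> linepath u v) has_derivative H \<circ> (\<lambda>t. t *\<^sub>R (v - u))) (at s within {0..1})"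
    using has_vector_derivative_linepath_within[unfolded has_vector_derivative_def]
    by (intro diff_chain_within has_derivative_subset[OF h]) auto
  moreover have "H \<circ> (\<lambda>t. t *\<^sub>R (v - u)) = (*) (H (v - u))"
    using linear_scale[OF has_derivative_linear[OF h]] by (auto simp: fun_eq_iff)
  ultimately show ?thesis by (simp add: has_field_derivative_def o_def)
qed

lemma linear_eq_on_shifted_interior:
  fixes g1 g2 :: "'a::real_normed_vector \<Rightarrow> 'b::real_vector"
  assumes "linear g1" "linear g2" "interior S \<noteq> {}"
    and eq: "\<And>w. w \<in> S \<Longrightarrow> g1 (w - x) = g2 (w - x)"
  shows "g1 = g2"
proof
  fix v :: 'a
  obtain c e where e: "e > 0" "ball c e \<subseteq> S"
    using assms(3) mem_interior by blast
  define s where "s = e / 2 / (norm v + 1)"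
  have pos: "0 < norm v + 1"
    by (simp add: add_nonneg_pos)
  have s: "s > 0" using e pos by (simp add: s_def)
  have "norm (s *\<^sub>R v) \<le> s * (norm v + 1)"
    using s by simp
  also have "\<dots> = e / 2"
    using pos by (simp add: s_def field_simps)
  also have "\<dots> < e"
    using e(1) by simp
  finally have "norm (s *\<^sub>R v) < e" .
  then have cs: "c + s *\<^sub>R v \<in> S" "c \<in> S" using e by (auto simp: dist_norm)
  have "s *\<^sub>R g1 v = g1 ((c + s *\<^sub>R v) - x) - g1 (c - x)"
    using assms(1) by (simp add: linear_diff linear_add linear_scale)
  also have "\<dots> = g2 ((c + s *\<^sub>R v) - x) - g2 (c - x)"
    using eq cs by simp
  also have "\<dots> = s *\<^sub>R g2 v"
    using assms(2) by (simp add: linear_diff linear_add linear_scale)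
  finally show "g1 v = g2 v" using s by simp
qed

lemma has_derivative_within_convex_unique:
  fixes f :: "'a::real_normed_vector \<Rightarrow> real"
  assumes S: "convex S" "interior S \<noteq> {}" "x \<in> S"
    and f1: "(f has_derivative f1) (at x within S)" and f2: "(f has_derivative f2) (at x within S)"
  shows "f1 = f2"
proof (rule linear_eq_on_shifted_interior[OF has_derivative_linear[OF f1] has_derivative_linear[OF f2] S(2)])
  fix w assume w: "w \<in> S"
  have d: "((\<lambda>t. f (linepath x w t)) has_real_derivative f' (w - x)) (at 0 within {0..1})"
    if "(f has_derivative f') (at x within S)" for f'
    using has_real_derivative_linepath_within[OF S(1,3) w, of 0 f f'] that by (simp add: linepath_0')
  show "f1 (w - x) = f2 (w - x)"
    by (rule has_field_derivative_unique[OF d[OF f1] d[OF f2]]) (simp add: at_within_Icc_at_right)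
qed

lemma multilinear_derivative:
  fixes F :: "'a::real_normed_vector \<Rightarrow> 'b::real_vector list \<Rightarrow> real"
  assumes S: "convex S" "interior S \<noteq> {}" "x \<in> S"
    and F: "\<And>x'. x' \<in> S \<Longrightarrow> multilinear n (F x')"
    and F': "\<And>vs. length vs = n \<Longrightarrow> ((\<lambda>x'. F x' vs) has_derivative (\<lambda>h. F' h vs)) (at x within S)"
  shows "multilinear n (F' h)"
  unfolding multilinear_def
proof (intro allI impI)
  fix vs :: "'b list" and i assume len: "length vs = n" and i: "i < n"
  have lin: "linear (\<lambda>v. F x' (vs[i := v]))" if "x' \<in> S" for x'
    using F[OF that] len i unfolding multilinear_def by blast
  let ?D = "\<lambda>v. (\<lambda>h. F' h (vs[i := v]))"
  have D: "((\<lambda>x'. F x' (vs[i := v])) has_derivative ?D v) (at x within S)" for v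
    using F' len by simp
  show "linear (\<lambda>v. F' h (vs[i := v]))"
  proof (rule linearI)
    fix a b :: 'b
    have "((\<lambda>x'. F x' (vs[i := a + b])) has_derivative (\<lambda>h. ?D a h + ?D b h)) (at x within S)"
      by (rule has_derivative_transform_within[OF has_derivative_add[OF D D] zero_less_one S(3)])
         (simp add: linear_add[OF lin])
    from has_derivative_within_convex_unique[OF S D this]
    show "F' h (vs[i := a + b]) = F' h (vs[i := a]) + F' h (vs[i := b])"
      by (rule fun_cong)
  next
    fix r :: real and b :: 'b
    have "((\<lambda>x'. F x' (vs[i := r *\<^sub>R b])) has_derivative (\<lambda>h. r * ?D b h)) (at x within S)"
      by (rule has_derivative_transform_within[OF has_derivative_mult_right[OF D] zero_less_one S(3)])
         (simp add: linear_scale[OF lin])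
    from has_derivative_within_convex_unique[OF S D this]
    show "F' h (vs[i := r *\<^sub>R b]) = r *\<^sub>R F' h (vs[i := b])"
      by (simp add: fun_eq_iff)
  qed
qed

section \<open>Taylor expansion along segments\<close>

lemma derivative_dominated_imp_diff_le:
  fixes q p :: "real \<Rightarrow> real"
  assumes q: "\<And>s. s \<in> {0..R} \<Longrightarrow> (q has_real_derivative q' s) (at s within {0..R})"
    and p: "\<And>s. s \<in> {0..R} \<Longrightarrow> (p has_real_derivative p' s) (at s within {0..R})"
    and dom: "\<And>s. s \<in> {0..R} \<Longrightarrow> \<bar>q' s\<bar> \<le> p' s"
    and r: "r \<in> {0..R}"
  shows "\<bar>q r - q 0\<bar> \<le> p r - p 0"
proof (cases "r = 0")
  case False
  then have r0: "0 < r" using r by simp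
  have mono: "g r - g 0 \<ge> 0"
    if g: "\<And>s. s \<in> {0..R} \<Longrightarrow> (g has_real_derivative g' s) (at s within {0..R})"
      and g': "\<And>s. s \<in> {0..R} \<Longrightarrow> g' s \<ge> 0" for g g'
  proof -
    have "\<exists>z\<in>{0<..<r}. g r - g 0 = g' z * (r - 0)"
    proof (rule mvt_simple[OF r0])
      fix s assume "0 \<le> s" "s \<le> r"
      then show "(g has_derivative (*) (g' s)) (at s within {0..r})"
        using g[of s] r has_derivative_subset[of g _ s "{0..R}" "{0..r}"]
        by (auto simp: has_field_derivative_def)
    qed
    then show ?thesis using g' r0 r by fastforce
  qed
  have "0 \<le> p' s - q' s" "0 \<le> p' s + q' s" if "s \<in> {0..R}" for s
    using dom[OF that] by (auto simp: abs_le_iff)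
  then have "(p r - q r) - (p 0 - q 0) \<ge> 0" "(p r + q r) - (p 0 + q 0) \<ge> 0"
    using mono[of "\<lambda>s. p s - q s" "\<lambda>s. p' s - q' s"] mono[of "\<lambda>s. p s + q s" "\<lambda>s. p' s + q' s"]
      DERIV_diff[OF p q] DERIV_add[OF p q] by auto
  then show ?thesis by (simp add: abs_le_iff)
qed simp

lemma has_real_derivative_Taylor_sum:
  fixes c :: "nat \<Rightarrow> real"
  shows "((\<lambda>s. \<Sum>j\<le>Suc n. c j * s ^ j / fact j) has_real_derivative
           (\<Sum>j\<le>n. c (Suc j) * s ^ j / fact j)) (at s within S)"
proof -
  have "((\<lambda>s. \<Sum>j\<le>Suc n. c j * s ^ j / fact j) has_real_derivative
         (\<Sum>j\<le>Suc n. c j * (of_nat j * s ^ (j - 1)) / fact j)) (at s within S)"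
    by (intro DERIV_sum) (auto intro!: derivative_eq_intros)
  also have "(\<Sum>j\<le>Suc n. c j * (of_nat j * s ^ (j - 1)) / fact j) = (\<Sum>j\<le>n. c (Suc j) * s ^ j / fact j)"
    by (subst sum.atMost_Suc_shift) (simp add: fact_Suc field_simps del: of_nat_Suc)
  finally show ?thesis .
qed

lemma Taylor_remainder_bound:
  fixes h :: "nat \<Rightarrow> real \<Rightarrow> real"
  assumes "\<And>j s. j < n \<Longrightarrow> s \<in> {0..R} \<Longrightarrow> (h j has_real_derivative h (Suc j) s) (at s within {0..R})"
    and "\<And>s. s \<in> {0..R} \<Longrightarrow> \<bar>h n s - h n 0\<bar> \<le> B"
    and "r \<in> {0..R}"
  shows "\<bar>h 0 r - (\<Sum>j\<le>n. h j 0 * r ^ j / fact j)\<bar> \<le> B * r ^ n / fact n"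
  using assms
proof (induction n arbitrary: h r)
  case (Suc n)
  define \<phi> where "\<phi> s = h 0 s - (\<Sum>j\<le>Suc n. h j 0 * s ^ j / fact j)" for s
  define \<phi>' where "\<phi>' s = h 1 s - (\<Sum>j\<le>n. h (Suc j) 0 * s ^ j / fact j)" for s
  have "\<bar>\<phi> r - \<phi> 0\<bar> \<le> B * r ^ Suc n / fact (Suc n) - B * 0 ^ Suc n / fact (Suc n)"
  proof (rule derivative_dominated_imp_diff_le[OF _ _ _ Suc.prems(3)])
    show "(\<phi> has_real_derivative \<phi>' s) (at s within {0..R})" if "s \<in> {0..R}" for s
      unfolding \<phi>_def \<phi>'_def
      using Suc.prems(1)[of 0 s] that by (intro DERIV_diff has_real_derivative_Taylor_sum) auto
    show "((\<lambda>s. B * s ^ Suc n / fact (Suc n)) has_real_derivative B * s ^ n / fact n) (at s within {0..R})" for s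
      using DERIV_cdivide[OF DERIV_cmult[OF DERIV_pow[of "Suc n" s]], of B "fact (Suc n)"]
      by (simp add: fact_Suc del: of_nat_Suc)
    show "\<bar>\<phi>' s\<bar> \<le> B * s ^ n / fact n" if "s \<in> {0..R}" for s
      unfolding \<phi>'_def using Suc.IH[of "\<lambda>j. h (Suc j)" s] Suc.prems that by auto
  qed
  moreover have "\<phi> 0 = 0" by (simp add: \<phi>_def sum.atMost_shift)
  ultimately show ?case by (simp add: \<phi>_def)
qed simp

lemma Taylor_bound_along_segment:
  fixes G :: "nat \<Rightarrow> 'b::real_normed_vector \<Rightarrow> 'b list \<Rightarrow> real"
  assumes Y: "convex Y" "y0 \<in> Y" "y \<in> Y"
    and G: "\<And>j z vs. j < k \<Longrightarrow> z \<in> Y \<Longrightarrow> length vs = j \<Longrightarrow>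
            ((\<lambda>z'. G j z' vs) has_derivative (\<lambda>h. G (Suc j) z (h # vs))) (at z within Y)"
    and B: "\<And>z. z \<in> Y \<Longrightarrow> \<bar>G k z (replicate k (y - y0)) - G k y0 (replicate k (y - y0))\<bar> \<le> B"
  shows "\<bar>G 0 y [] - (\<Sum>j\<le>k. G j y0 (replicate j (y - y0)) / fact j)\<bar> \<le> B / fact k"
proof -
  define h where "h j s = G j (linepath y0 y s) (replicate j (y - y0))" for j s
  have "\<bar>h 0 1 - (\<Sum>j\<le>k. h j 0 * 1 ^ j / fact j)\<bar> \<le> B * 1 ^ k / fact k"
  proof (rule Taylor_remainder_bound)
    show "(h j has_real_derivative h (Suc j) s) (at s within {0..1})" if "j < k" "s \<in> {0..1}" for j s
      unfolding h_def
      using has_real_derivative_linepath_within[OF Y that(2) G[OF that(1) linepath_mem_convex[OF Y that(2)]]]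
      by simp
    show "\<bar>h k s - h k 0\<bar> \<le> B" if "s \<in> {0..1}" for s
      unfolding h_def using B linepath_mem_convex[OF Y that] by (simp add: linepath_0')
  qed simp
  then show ?thesis by (simp add: h_def linepath_0' linepath_1')
qed

section \<open>Weakly convex functions\<close>

lemma mono_derivative_imp_convex_01:
  fixes q :: "real \<Rightarrow> real"
  assumes d: "\<And>s. s \<in> {0..1} \<Longrightarrow> (q has_real_derivative q' s) (at s within {0..1})"
    and mono: "\<And>s1 s2. 0 \<le> s1 \<Longrightarrow> s1 \<le> s2 \<Longrightarrow> s2 \<le> 1 \<Longrightarrow> q' s1 \<le> q' s2"
  shows "t \<in> {0..1} \<Longrightarrow> q t \<le> (1 - t) * q 0 + t * q 1"
    and "q 0 + q' 0 \<le> q 1"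
proof -
  have mvt: "\<exists>z\<in>{a<..<b}. q b - q a = q' z * (b - a)" if "0 \<le> a" "a < b" "b \<le> 1" for a b
  proof (rule mvt_simple[OF that(2)])
    fix s assume "a \<le> s" "s \<le> b"
    then show "(q has_derivative (*) (q' s)) (at s within {a..b})"
      using d[of s] that has_derivative_subset[of q _ s "{0..1}" "{a..b}"]
      by (auto simp: has_field_derivative_def)
  qed
  show "q t \<le> (1 - t) * q 0 + t * q 1" if t: "t \<in> {0..1}"
  proof (cases "t = 0 \<or> t = 1")
    case False
    then have t: "0 < t" "t < 1" using t by auto
    obtain z1 where z1: "z1 \<in> {0<..<t}" "q t - q 0 = q' z1 * t" using mvt[of 0 t] t by auto
    obtain z2 where z2: "z2 \<in> {t<..<1}" "q 1 - q t = q' z2 * (1 - t)" using mvt[of t 1] t by auto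
    have "(1 - t) * (q t - q 0) \<le> t * (q 1 - q t)"
      using mono[of z1 z2] z1 z2 t by (simp add: mult_left_mono mult.commute mult.left_commute)
    then show ?thesis by (simp add: algebra_simps)
  qed auto
  obtain z where "z \<in> {0<..<1}" "q 1 - q 0 = q' z * (1 - 0)" using mvt[of 0 1] by auto
  then show "q 0 + q' 0 \<le> q 1" using mono[of 0 z] by simp
qed

lemma lipschitz_derivative_deviation_01:
  fixes q :: "real \<Rightarrow> real"
  assumes d: "\<And>s. s \<in> {0..1} \<Longrightarrow> (q has_real_derivative q' s) (at s within {0..1})"
    and lip: "\<And>s1 s2. 0 \<le> s1 \<Longrightarrow> s1 \<le> s2 \<Longrightarrow> s2 \<le> 1 \<Longrightarrow> \<bar>q' s2 - q' s1\<bar> \<le> K * (s2 - s1)"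
  shows "t \<in> {0..1} \<Longrightarrow> \<bar>(1 - t) * q 0 + t * q 1 - q t\<bar> \<le> K / 2 * t * (1 - t)"
    and "\<bar>q 1 - q 0 - q' 0\<bar> \<le> K / 2"
proof -
  \<comment> \<open>Adding K s^2 / 2 to q or to -q makes the derivative monotone.\<close>
  define qp where "qp s = q s + K / 2 * s\<^sup>2" for s
  define qm where "qm s = - q s + K / 2 * s\<^sup>2" for s
  have dp: "(qp has_real_derivative q' s + K * s) (at s within {0..1})" if "s \<in> {0..1}" for s
    unfolding qp_def using d[OF that] by (auto intro!: derivative_eq_intros)
  have dm: "(qm has_real_derivative - q' s + K * s) (at s within {0..1})" if "s \<in> {0..1}" for s
    unfolding qm_def using d[OF that] by (auto intro!: derivative_eq_intros)
  have mp: "q' s1 + K * s1 \<le> q' s2 + K * s2" and mm: "- q' s1 + K * s1 \<le> - q' s2 + K * s2"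
    if "0 \<le> s1" "s1 \<le> s2" "s2 \<le> 1" for s1 s2
    using lip[OF that] by (auto simp: abs_le_iff algebra_simps)
  show "\<bar>(1 - t) * q 0 + t * q 1 - q t\<bar> \<le> K / 2 * t * (1 - t)" if t: "t \<in> {0..1}"
  proof -
    have "K / 2 * t * (1 - t) = t * (K / 2) - K / 2 * t\<^sup>2"
      by (simp add: field_simps power2_eq_square)
    moreover have "q t + K / 2 * t\<^sup>2 \<le> (1 - t) * q 0 + t * q 1 + t * (K / 2)"
      using mono_derivative_imp_convex_01(1)[OF dp mp t] by (simp add: qp_def algebra_simps)
    moreover have "- q t + K / 2 * t\<^sup>2 \<le> - ((1 - t) * q 0) - t * q 1 + t * (K / 2)"
      using mono_derivative_imp_convex_01(1)[OF dm mm t] by (simp add: qm_def algebra_simps)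
    ultimately show ?thesis unfolding abs_le_iff by (intro conjI) linarith+
  qed
  show "\<bar>q 1 - q 0 - q' 0\<bar> \<le> K / 2"
    using mono_derivative_imp_convex_01(2)[OF dp mp] mono_derivative_imp_convex_01(2)[OF dm mm]
    unfolding qp_def qm_def abs_le_iff by simp
qed

lemma lipschitz_derivative_deviation:
  fixes h :: "'a::real_normed_vector \<Rightarrow> real"
  assumes X: "convex X" "u \<in> X" "v \<in> X"
    and d: "\<And>x. x \<in> X \<Longrightarrow> (h has_derivative H x) (at x within X)"
    and lip: "\<And>a b. a \<in> X \<Longrightarrow> b \<in> X \<Longrightarrow> \<bar>H a (v - u) - H b (v - u)\<bar> \<le> c * norm (a - b) * norm (v - u)"
  shows "t \<in> {0..1} \<Longrightarrow> \<bar>(1 - t) * h u + t * h v - h (linepath u v t)\<bar> \<le> c / 2 * t * (1 - t) * (norm (v - u))\<^sup>2"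
    and "\<bar>h v - h u - H u (v - u)\<bar> \<le> c / 2 * (norm (v - u))\<^sup>2"
proof -
  let ?q = "\<lambda>s. h (linepath u v s)" and ?q' = "\<lambda>s. H (linepath u v s) (v - u)"
  have dq: "(?q has_real_derivative ?q' s) (at s within {0..1})" if "s \<in> {0..1}" for s
    using has_real_derivative_linepath_within[OF X that d[OF linepath_mem_convex[OF X that]]] .
  have "\<bar>?q' s2 - ?q' s1\<bar> \<le> (c * (norm (v - u))\<^sup>2) * (s2 - s1)"
    if "0 \<le> s1" "s1 \<le> s2" "s2 \<le> 1" for s1 s2
  proof -
    have "linepath u v s2 - linepath u v s1 = (s2 - s1) *\<^sub>R (v - u)"
      by (simp add: linepath_def algebra_simps)
    then show ?thesis
      using lip[OF linepath_mem_convex[OF X] linepath_mem_convex[OF X], of s2 s1] that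
      by (simp add: power2_eq_square mult_ac)
  qed
  note lipq = this
  have dev: "\<bar>(1 - t) * ?q 0 + t * ?q 1 - ?q t\<bar> \<le> c * (norm (v - u))\<^sup>2 / 2 * t * (1 - t)"
    "\<bar>?q 1 - ?q 0 - ?q' 0\<bar> \<le> c * (norm (v - u))\<^sup>2 / 2" if "t \<in> {0..1}" for t
    using lipschitz_derivative_deviation_01[of ?q ?q' "c * (norm (v - u))\<^sup>2"] dq lipq that by blast+
  show "\<bar>(1 - t) * h u + t * h v - h (linepath u v t)\<bar> \<le> c / 2 * t * (1 - t) * (norm (v - u))\<^sup>2"
    if "t \<in> {0..1}"
    using dev(1)[OF that] by (simp add: linepath_0' linepath_1' mult_ac)
  show "\<bar>h v - h u - H u (v - u)\<bar> \<le> c / 2 * (norm (v - u))\<^sup>2"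
    using dev(2)[of 0] by (simp add: linepath_0' linepath_1' mult_ac)
qed

definition weakly_convex_on :: "'a::real_inner set \<Rightarrow> real \<Rightarrow> ('a \<Rightarrow> real) \<Rightarrow> bool" where
  "weakly_convex_on X c \<psi> \<longleftrightarrow> convex_on X (\<lambda>x. \<psi> x + c / 2 * (norm x)\<^sup>2)"

lemma norm_linepath_squared:
  fixes u v :: "'a::real_inner"
  shows "(norm (linepath u v t))\<^sup>2 = (1 - t) * (norm u)\<^sup>2 + t * (norm v)\<^sup>2 - t * (1 - t) * (norm (v - u))\<^sup>2"
  unfolding power2_norm_eq_inner linepath_def
  by (simp add: inner_add_left inner_add_right inner_diff_left inner_diff_right inner_commute algebra_simps)

lemma weakly_convex_on_iff:
  "weakly_convex_on X c \<psi> \<longleftrightarrow> convex X \<and> (\<forall>u\<in>X. \<forall>v\<in>X. \<forall>t\<in>{0..1}.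
     \<psi> (linepath u v t) \<le> (1 - t) * \<psi> u + t * \<psi> v + c / 2 * t * (1 - t) * (norm (v - u))\<^sup>2)"
proof -
  have E: "c / 2 * (norm (linepath u v t))\<^sup>2 =
      (1 - t) * (c / 2 * (norm u)\<^sup>2) + t * (c / 2 * (norm v)\<^sup>2) - c / 2 * t * (1 - t) * (norm (v - u))\<^sup>2"
    for u v :: 'a and t
    unfolding norm_linepath_squared by (simp add: field_simps)
  have key: "\<psi> (linepath u v t) + c / 2 * (norm (linepath u v t))\<^sup>2
        \<le> (1 - t) * (\<psi> u + c / 2 * (norm u)\<^sup>2) + t * (\<psi> v + c / 2 * (norm v)\<^sup>2) \<longleftrightarrow>
      \<psi> (linepath u v t) \<le> (1 - t) * \<psi> u + t * \<psi> v + c / 2 * t * (1 - t) * (norm (v - u))\<^sup>2"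
    for u v :: 'a and t
    by (simp only: distrib_left E) (intro iffI; linarith)
  show ?thesis
  proof
    assume "weakly_convex_on X c \<psi>"
    then show "convex X \<and> (\<forall>u\<in>X. \<forall>v\<in>X. \<forall>t\<in>{0..1}.
        \<psi> (linepath u v t) \<le> (1 - t) * \<psi> u + t * \<psi> v + c / 2 * t * (1 - t) * (norm (v - u))\<^sup>2)"
      unfolding weakly_convex_on_def using key convex_on_imp_convex
      by (fastforce dest: convex_onD simp: linepath_def)
  next
    assume "convex X \<and> (\<forall>u\<in>X. \<forall>v\<in>X. \<forall>t\<in>{0..1}.
        \<psi> (linepath u v t) \<le> (1 - t) * \<psi> u + t * \<psi> v + c / 2 * t * (1 - t) * (norm (v - u))\<^sup>2)"
    then show "weakly_convex_on X c \<psi>"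
      unfolding weakly_convex_on_def using key
      by (intro convex_onI) (auto simp: linepath_def)
  qed
qed

lemma weakly_convex_onD:
  "weakly_convex_on X c \<psi> \<Longrightarrow> u \<in> X \<Longrightarrow> v \<in> X \<Longrightarrow> t \<in> {0..1} \<Longrightarrow>
     \<psi> (linepath u v t) \<le> (1 - t) * \<psi> u + t * \<psi> v + c / 2 * t * (1 - t) * (norm (v - u))\<^sup>2"
  unfolding weakly_convex_on_iff by blast

lemma weakly_convex_on_mono:
  assumes "weakly_convex_on X c \<psi>" "c \<le> c'"
  shows "weakly_convex_on X c' \<psi>"
  unfolding weakly_convex_on_iff
proof (intro conjI ballI)
  show "convex X" using assms(1) unfolding weakly_convex_on_iff by blast
  fix u v and t :: real assume uvt: "u \<in> X" "v \<in> X" "t \<in> {0..1}"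
  have "c / 2 * t * (1 - t) * (norm (v - u))\<^sup>2 \<le> c' / 2 * t * (1 - t) * (norm (v - u))\<^sup>2"
    using assms(2) uvt(3) by (intro mult_right_mono) auto
  with weakly_convex_onD[OF assms(1) uvt]
  show "\<psi> (linepath u v t) \<le> (1 - t) * \<psi> u + t * \<psi> v + c' / 2 * t * (1 - t) * (norm (v - u))\<^sup>2"
    by linarith
qed

lemma weakly_convex_on_cong:
  assumes "weakly_convex_on X c \<psi>" "\<And>x. x \<in> X \<Longrightarrow> \<psi> x = \<psi>' x"
  shows "weakly_convex_on X c \<psi>'"
  using assms linepath_mem_convex unfolding weakly_convex_on_iff by metis

lemma weakly_convex_on_SUP:
  fixes F :: "'a::real_inner \<Rightarrow> 'b \<Rightarrow> real"
  assumes "convex X" "Y \<noteq> {}" and bdd: "\<And>x. x \<in> X \<Longrightarrow> bdd_above (F x ` Y)"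
    and wc: "\<And>y. y \<in> Y \<Longrightarrow> weakly_convex_on X c (\<lambda>x. F x y)"
  shows "weakly_convex_on X c (\<lambda>x. SUP y\<in>Y. F x y)"
  unfolding weakly_convex_on_iff
proof (intro conjI ballI assms(1))
  fix u v and t :: real assume uv: "u \<in> X" "v \<in> X" and t: "t \<in> {0..1}"
  show "(SUP y\<in>Y. F (linepath u v t) y)
      \<le> (1 - t) * (SUP y\<in>Y. F u y) + t * (SUP y\<in>Y. F v y) + c / 2 * t * (1 - t) * (norm (v - u))\<^sup>2"
  proof (rule cSUP_least[OF assms(2)])
    fix y assume y: "y \<in> Y"
    have "(1 - t) * F u y \<le> (1 - t) * (SUP y\<in>Y. F u y)" "t * F v y \<le> t * (SUP y\<in>Y. F v y)"
      using cSUP_upper[OF y bdd[OF uv(1)]] cSUP_upper[OF y bdd[OF uv(2)]] t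
      by (auto intro: mult_left_mono)
    then show "F (linepath u v t) y
        \<le> (1 - t) * (SUP y\<in>Y. F u y) + t * (SUP y\<in>Y. F v y) + c / 2 * t * (1 - t) * (norm (v - u))\<^sup>2"
      using weakly_convex_onD[OF wc[OF y] uv t] by linarith
  qed
qed

section \<open>Moreau envelopes\<close>

lemma has_derivative_if_quadratic_remainder:
  fixes F :: "'a::real_inner \<Rightarrow> real"
  assumes "\<And>y. \<bar>F y - F x - g \<bullet> (y - x)\<bar> \<le> C * (norm (y - x))\<^sup>2"
  shows "(F has_derivative (\<lambda>h. g \<bullet> h)) (at x)"
  unfolding has_derivative_at_alt
proof (intro conjI allI impI bounded_linear_inner_right)
  fix e :: real assume e: "e > 0"
  show "\<exists>d>0. \<forall>y. norm (y - x) < d \<longrightarrow> norm (F y - F x - g \<bullet> (y - x)) \<le> e * norm (y - x)"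
  proof (intro exI[of _ "e / (\<bar>C\<bar> + 1)"] conjI allI impI)
    show "0 < e / (\<bar>C\<bar> + 1)" using e by (simp add: add_nonneg_pos)
    fix y assume "norm (y - x) < e / (\<bar>C\<bar> + 1)"
    then have "(\<bar>C\<bar> + 1) * norm (y - x) \<le> e"
      by (simp add: field_simps add_nonneg_pos)
    then have "(\<bar>C\<bar> + 1) * norm (y - x) * norm (y - x) \<le> e * norm (y - x)"
      by (simp add: mult_right_mono)
    moreover have "C * (norm (y - x))\<^sup>2 \<le> (\<bar>C\<bar> + 1) * norm (y - x) * norm (y - x)"
      using mult_right_mono[of C "\<bar>C\<bar> + 1" "(norm (y - x))\<^sup>2"] by (simp add: power2_eq_square mult.assoc)
    ultimately show "norm (F y - F x - g \<bullet> (y - x)) \<le> e * norm (y - x)"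
      using assms[of y] by simp
  qed
qed

lemma grad_eqI:
  fixes F :: "'a::real_inner \<Rightarrow> real"
  assumes "(F has_derivative (\<lambda>h. g \<bullet> h)) (at x)"
  shows "grad F x = g"
proof -
  have "(F has_derivative (\<lambda>h. grad F x \<bullet> h)) (at x)"
    unfolding grad_def using assms by (rule someI)
  then have "(\<lambda>h. grad F x \<bullet> h) = (\<lambda>h. g \<bullet> h)"
    using assms by (rule has_derivative_unique)
  then have "(grad F x - g) \<bullet> (grad F x - g) = 0"
    by (metis inner_diff_left diff_self)
  then show ?thesis by simp
qed

lemma grad_moreau_0: "grad (moreau \<psi> X 0) x = 0"
proof (rule grad_eqI)
  have "moreau \<psi> X 0 = (\<lambda>_. Inf (\<psi> ` X))"
    by (simp add: fun_eq_iff moreau_def)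
  then show "(moreau \<psi> X 0 has_derivative (\<lambda>h. 0 \<bullet> h)) (at x)"
    by simp
qed

lemma grad_moreau_const:
  fixes x :: "'a::real_inner"
  assumes "x \<in> X" "0 \<le> lb"
  shows "grad (moreau (\<lambda>_. C) X lb) x = 0"
proof (rule grad_eqI, rule has_derivative_if_quadratic_remainder[where C = "lb / 2"])
  have bdd: "bdd_below ((\<lambda>u. C + lb / 2 * (norm (u - y))\<^sup>2) ` X)" for y
    using assms(2) by (intro bdd_belowI2[where m = C]) simp
  have lower: "C \<le> moreau (\<lambda>_. C) X lb y" for y
    unfolding moreau_def using assms by (intro cINF_greatest) auto
  have upper: "moreau (\<lambda>_. C) X lb y \<le> C + lb / 2 * (norm (x - y))\<^sup>2" for y
    unfolding moreau_def by (rule cINF_lower[OF bdd assms(1)])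
  fix y
  show "\<bar>moreau (\<lambda>_. C) X lb y - moreau (\<lambda>_. C) X lb x - 0 \<bullet> (y - x)\<bar> \<le> lb / 2 * (norm (y - x))\<^sup>2"
    using lower[of x] upper[of x] lower[of y] upper[of y] by (simp add: norm_minus_commute)
qed

lemma Cauchy_if_dist_squared_le:
  fixes s :: "nat \<Rightarrow> 'a::metric_space"
  assumes "\<And>m n. (dist (s m) (s n))\<^sup>2 \<le> g m + g n" and "g \<longlonglongrightarrow> 0"
  shows "Cauchy s"
proof (rule metric_CauchyI)
  fix e :: real assume "e > 0"
  then have "e\<^sup>2 / 2 > 0" by simp
  from LIMSEQ_D[OF assms(2) this] obtain N where N: "\<And>n. n \<ge> N \<Longrightarrow> \<bar>g n\<bar> < e\<^sup>2 / 2"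
    by auto
  have "dist (s m) (s n) < e" if "m \<ge> N" "n \<ge> N" for m n
  proof -
    have "(dist (s m) (s n))\<^sup>2 < e\<^sup>2"
      using assms(1)[of m n] N[OF that(1)] N[OF that(2)] by linarith
    then show ?thesis using \<open>e > 0\<close> by (simp add: power_less_imp_less_base)
  qed
  then show "\<exists>N. \<forall>m\<ge>N. \<forall>n\<ge>N. dist (s m) (s n) < e" by blast
qed

locale weakly_convex_envelope =
  fixes \<psi> :: "'a::{real_inner,complete_space} \<Rightarrow> real" and X :: "'a set" and L :: real
  assumes weakly_convex: "weakly_convex_on X L \<psi>"
    and nonempty: "X \<noteq> {}" and pos: "L > 0"
    and minorant: "\<exists>A B. \<forall>u\<in>X. A - B * norm u - L / 2 * (norm u)\<^sup>2 \<le> \<psi> u"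
begin

abbreviation obj :: "'a \<Rightarrow> 'a \<Rightarrow> real" where
  "obj x u \<equiv> \<psi> u + L * (norm (u - x))\<^sup>2"

abbreviation env :: "'a \<Rightarrow> real" where
  "env \<equiv> moreau \<psi> X (2 * L)"

lemma env_eq: "env x = (INF u\<in>X. obj x u)"
  by (simp add: moreau_def)

lemma obj_bdd_below: "bdd_below (obj x ` X)"
proof -
  obtain A B where AB: "\<And>u. u \<in> X \<Longrightarrow> A - B * norm u - L / 2 * (norm u)\<^sup>2 \<le> \<psi> u"
    using minorant by blast
  let ?c = "B + 2 * L * norm x"
  show ?thesis
  proof (rule bdd_belowI2[where m = "A + L * (norm x)\<^sup>2 - ?c\<^sup>2 / (2 * L)"])
    fix u assume u: "u \<in> X"
    \<comment> \<open>complete the square in r = norm u\<close>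
    define r where "r = norm u"
    have "0 \<le> L / 2 * (r - ?c / L)\<^sup>2" using pos by simp
    also have "\<dots> = (A - B * r - L / 2 * r\<^sup>2 + L * (r - norm x)\<^sup>2) - (A + L * (norm x)\<^sup>2 - ?c\<^sup>2 / (2 * L))"
      using pos by (simp add: power2_eq_square field_simps)
    finally have "A + L * (norm x)\<^sup>2 - ?c\<^sup>2 / (2 * L) \<le> A - B * r - L / 2 * r\<^sup>2 + L * (r - norm x)\<^sup>2"
      by simp
    also have "L * (r - norm x)\<^sup>2 \<le> L * (norm (u - x))\<^sup>2"
      using pos norm_triangle_ineq3[of u x] unfolding r_def
      by (intro mult_left_mono) (auto simp: abs_le_square_iff[symmetric])
    finally show "A + L * (norm x)\<^sup>2 - ?c\<^sup>2 / (2 * L) \<le> obj x u"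
      using AB[OF u] unfolding r_def by linarith
  qed
qed

lemma env_le: "u \<in> X \<Longrightarrow> env x \<le> obj x u"
  unfolding env_eq by (rule cINF_lower[OF obj_bdd_below])

lemma env_greatest: "(\<And>u. u \<in> X \<Longrightarrow> c \<le> obj x u) \<Longrightarrow> c \<le> env x"
  unfolding env_eq using nonempty by (rule cINF_greatest)

lemma minimizing_sequence_exists: "\<exists>s. (\<forall>n. s n \<in> X) \<and> (\<lambda>n. obj x (s n)) \<longlonglongrightarrow> env x"
proof -
  have "\<exists>u\<in>X. obj x u < env x + 1 / Suc n" for n
    using cInf_less_iff[OF _ obj_bdd_below[of x], where y = "env x + 1 / Suc n"] nonempty unfolding env_eq by simp
  then obtain s where s: "\<And>n. s n \<in> X" "\<And>n. obj x (s n) < env x + 1 / Suc n"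
    by metis
  have "(\<lambda>n. obj x (s n)) \<longlonglongrightarrow> env x"
  proof (rule real_tendsto_sandwich[of "\<lambda>_. env x" _ _ "\<lambda>n. env x + 1 / Suc n"])
    show "(\<lambda>n. env x + 1 / Suc n) \<longlonglongrightarrow> env x"
      using tendsto_add[OF tendsto_const LIMSEQ_Suc[OF lim_const_over_n[of 1]]] by simp
  qed (use s env_le in \<open>auto intro: always_eventually less_imp_le\<close>)
  with s show ?thesis by blast
qed

lemma quadratic_growth:
  assumes "u \<in> X" "v \<in> X" "t \<in> {0..1}"
  shows "L / 2 * t * (1 - t) * (norm (v - u))\<^sup>2 \<le> (1 - t) * (obj x u - env x) + t * (obj x v - env x)"
proof -
  let ?w = "linepath u v t"
  have "?w - x = linepath (u - x) (v - x) t"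
    by (simp add: linepath_def algebra_simps)
  then have "(1 - t) * (obj x u - env x) + t * (obj x v - env x) - L / 2 * t * (1 - t) * (norm (v - u))\<^sup>2
      = ((1 - t) * \<psi> u + t * \<psi> v + L / 2 * t * (1 - t) * (norm (v - u))\<^sup>2 - \<psi> ?w) + (obj x ?w - env x)"
    by (simp add: norm_linepath_squared field_simps)
  moreover have "env x \<le> obj x ?w"
    using env_le linepath_mem_convex[OF _ assms] weakly_convex by (simp add: weakly_convex_on_iff)
  moreover note weakly_convex_onD[OF weakly_convex assms]
  ultimately show ?thesis by linarith
qed

text \<open>X is not assumed closed, so the proximal point is only a limit of minimizing sequences
  and need not lie in X.\<close>

definition prox_point :: "'a \<Rightarrow> 'a \<Rightarrow> bool" where
  "prox_point x p \<longleftrightarrow> (\<exists>s. (\<forall>n. s n \<in> X) \<and> s \<longlonglongrightarrow> p \<and> (\<lambda>n. obj x (s n)) \<longlonglongrightarrow> env x)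
     \<and> (\<forall>u\<in>X. L / 2 * (norm (u - p))\<^sup>2 \<le> obj x u - env x)"

lemma prox_point_growth: "prox_point x p \<Longrightarrow> u \<in> X \<Longrightarrow> L / 2 * (norm (u - p))\<^sup>2 \<le> obj x u - env x"
  unfolding prox_point_def by blast

lemma prox_point_minimizing_sequence:
  assumes "prox_point x p"
  obtains s where "\<And>n. s n \<in> X" "s \<longlonglongrightarrow> p" "(\<lambda>n. obj x (s n)) \<longlonglongrightarrow> env x"
  using assms unfolding prox_point_def by blast

lemma prox_point_exists: "\<exists>p. prox_point x p"
proof -
  obtain s where s: "\<And>n. s n \<in> X" and lim: "(\<lambda>n. obj x (s n)) \<longlonglongrightarrow> env x"
    using minimizing_sequence_exists by blast
  define g where "g n = 4 / L * (obj x (s n) - env x)" for n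
  have scale: "c \<le> 4 / L * a + 4 / L * b" if "L / 2 * (1/2) * (1 - 1/2) * c \<le> (1 - 1/2) * a + 1/2 * b" for a b c
    using that pos by (simp add: field_simps)
  have "(dist (s m) (s n))\<^sup>2 \<le> g m + g n" for m n
    using scale[OF quadratic_growth[OF s[of n] s[of m], where t = "1/2" and x = x]]
    by (simp add: g_def dist_norm norm_minus_commute)
  moreover have "g \<longlonglongrightarrow> 0"
    unfolding g_def using tendsto_mult_right_zero[OF LIM_zero[OF lim]] .
  ultimately obtain p where sp: "s \<longlonglongrightarrow> p"
    using Cauchy_if_dist_squared_le Cauchy_convergent_iff convergent_def by blast
  have "L / 2 * (norm (u - p))\<^sup>2 \<le> obj x u - env x" if u: "u \<in> X" for u
  proof (rule field_le_mult_one_interval)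
    fix t :: real assume t: "0 < t" "t < 1"
    have "L / 2 * t * (1 - t) * (norm (p - u))\<^sup>2 \<le> (1 - t) * (obj x u - env x) + t * 0"
    proof (rule LIMSEQ_le)
      show "(\<lambda>n. L / 2 * t * (1 - t) * (norm (s n - u))\<^sup>2) \<longlonglongrightarrow> L / 2 * t * (1 - t) * (norm (p - u))\<^sup>2"
        by (intro tendsto_intros sp)
      show "(\<lambda>n. (1 - t) * (obj x u - env x) + t * (obj x (s n) - env x)) \<longlonglongrightarrow> (1 - t) * (obj x u - env x) + t * 0"
        by (intro tendsto_intros LIM_zero lim)
      show "\<exists>N. \<forall>n\<ge>N. L / 2 * t * (1 - t) * (norm (s n - u))\<^sup>2
          \<le> (1 - t) * (obj x u - env x) + t * (obj x (s n) - env x)"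
        using quadratic_growth[OF u s, where t = t and x = x] t by simp
    qed
    then have "(1 - t) * (t * (L / 2 * (norm (u - p))\<^sup>2)) \<le> (1 - t) * (obj x u - env x)"
      by (simp add: norm_minus_commute algebra_simps)
    then show "t * (L / 2 * (norm (u - p))\<^sup>2) \<le> obj x u - env x"
      using t by (simp add: mult_le_cancel_left_pos)
  qed
  then have "prox_point x p"
    unfolding prox_point_def using s sp lim by blast
  then show ?thesis ..
qed

lemma env_has_derivative:
  assumes "prox_point x p"
  shows "(env has_derivative (\<lambda>h. ((2 * L) *\<^sub>R (x - p)) \<bullet> h)) (at x)"
proof (rule has_derivative_if_quadratic_remainder[where C = L])
  fix y
  obtain s where s: "\<And>n. s n \<in> X" "s \<longlonglongrightarrow> p" "(\<lambda>n. obj x (s n)) \<longlonglongrightarrow> env x"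
    by (rule prox_point_minimizing_sequence[OF assms]) blast
  have growth: "env x + L / 2 * (norm (u - p))\<^sup>2 \<le> obj x u" if "u \<in> X" for u
    using prox_point_growth[OF assms that] by simp
  have shift: "obj y u = obj x u - 2 * L * ((u - x) \<bullet> (y - x)) + L * (norm (y - x))\<^sup>2" for u
    unfolding power2_norm_eq_inner
    by (simp add: inner_diff_left inner_diff_right inner_commute algebra_simps)
  have upper: "env y \<le> env x - 2 * L * ((p - x) \<bullet> (y - x)) + L * (norm (y - x))\<^sup>2"
  proof (rule LIMSEQ_le_const)
    show "(\<lambda>n. obj x (s n) - 2 * L * ((s n - x) \<bullet> (y - x)) + L * (norm (y - x))\<^sup>2)
        \<longlonglongrightarrow> env x - 2 * L * ((p - x) \<bullet> (y - x)) + L * (norm (y - x))\<^sup>2"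
      by (intro tendsto_intros s)
    have "env y \<le> obj x (s n) - 2 * L * ((s n - x) \<bullet> (y - x)) + L * (norm (y - x))\<^sup>2" for n
      using env_le[of "s n" y] s(1)[of n] unfolding shift by simp
    then show "\<exists>N. \<forall>n\<ge>N. env y \<le> obj x (s n) - 2 * L * ((s n - x) \<bullet> (y - x)) + L * (norm (y - x))\<^sup>2"
      by blast
  qed
  have lower: "env x - 2 * L * ((p - x) \<bullet> (y - x)) - L * (norm (y - x))\<^sup>2 \<le> env y"
  proof (rule env_greatest)
    fix u assume u: "u \<in> X"
    \<comment> \<open>the growth term absorbs the cross term by completing a square\<close>
    have "L / 2 * (norm (u - p))\<^sup>2 - 2 * L * ((u - p) \<bullet> (y - x)) + 2 * L * (norm (y - x))\<^sup>2
        = L / 2 * (norm ((u - p) - 2 *\<^sub>R (y - x)))\<^sup>2"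
      unfolding power2_norm_eq_inner
      by (simp add: inner_diff_left inner_diff_right inner_commute algebra_simps)
    moreover have "0 \<le> L / 2 * (norm ((u - p) - 2 *\<^sub>R (y - x)))\<^sup>2"
      using pos by simp
    moreover have "(u - x) \<bullet> (y - x) = (u - p) \<bullet> (y - x) + (p - x) \<bullet> (y - x)"
      by (simp add: inner_diff_left)
    ultimately show "env x - 2 * L * ((p - x) \<bullet> (y - x)) - L * (norm (y - x))\<^sup>2 \<le> obj y u"
      using growth[OF u] shift[of u] by (simp add: algebra_simps)
  qed
  have "((2 * L) *\<^sub>R (x - p)) \<bullet> (y - x) = - 2 * L * ((p - x) \<bullet> (y - x))"
    by (simp add: inner_diff_left algebra_simps)
  then show "\<bar>env y - env x - ((2 * L) *\<^sub>R (x - p)) \<bullet> (y - x)\<bar> \<le> L * (norm (y - x))\<^sup>2"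
    using upper lower by (simp add: abs_le_iff)
qed

lemma grad_env: "prox_point x p \<Longrightarrow> grad env x = (2 * L) *\<^sub>R (x - p)"
  by (rule grad_eqI[OF env_has_derivative])

end

lemma grad_moreau_diff_le:
  assumes "weakly_convex_envelope \<psi>1 X L" "weakly_convex_envelope \<psi>2 X L" "0 \<le> K"
    and lip: "\<And>u v. u \<in> X \<Longrightarrow> v \<in> X \<Longrightarrow> \<bar>(\<psi>1 u - \<psi>2 u) - (\<psi>1 v - \<psi>2 v)\<bar> \<le> K * norm (u - v)"
  shows "norm (grad (moreau \<psi>1 X (2 * L)) x - grad (moreau \<psi>2 X (2 * L)) x) \<le> 2 * K"
proof -
  interpret A: weakly_convex_envelope \<psi>1 X L by fact
  interpret B: weakly_convex_envelope \<psi>2 X L by fact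
  obtain p1 p2 where p1: "A.prox_point x p1" and p2: "B.prox_point x p2"
    using A.prox_point_exists B.prox_point_exists by blast
  obtain s1 where s1: "\<And>n. s1 n \<in> X" "s1 \<longlonglongrightarrow> p1" "(\<lambda>n. A.obj x (s1 n)) \<longlonglongrightarrow> A.env x"
    by (rule A.prox_point_minimizing_sequence[OF p1]) blast
  obtain s2 where s2: "\<And>n. s2 n \<in> X" "s2 \<longlonglongrightarrow> p2" "(\<lambda>n. B.obj x (s2 n)) \<longlonglongrightarrow> B.env x"
    by (rule B.prox_point_minimizing_sequence[OF p2]) blast
  \<comment> \<open>test the growth inequality of each envelope with the other's minimizing sequence\<close>
  have "L / 2 * (norm (s2 n - p1))\<^sup>2 + L / 2 * (norm (s1 n - p2))\<^sup>2
      \<le> K * norm (s2 n - s1 n) + (A.obj x (s1 n) - A.env x) + (B.obj x (s2 n) - B.env x)" for n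
    using A.prox_point_growth[OF p1 s2(1)[of n]] B.prox_point_growth[OF p2 s1(1)[of n]]
      lip[OF s2(1)[of n] s1(1)[of n]] unfolding abs_le_iff by linarith
  then have "L / 2 * (norm (p2 - p1))\<^sup>2 + L / 2 * (norm (p1 - p2))\<^sup>2 \<le> K * norm (p2 - p1) + 0 + 0"
  proof (intro LIMSEQ_le[OF _ _ exI[of _ 0]])
    show "(\<lambda>n. L / 2 * (norm (s2 n - p1))\<^sup>2 + L / 2 * (norm (s1 n - p2))\<^sup>2)
        \<longlonglongrightarrow> L / 2 * (norm (p2 - p1))\<^sup>2 + L / 2 * (norm (p1 - p2))\<^sup>2"
      by (intro tendsto_intros s1(2) s2(2))
    show "(\<lambda>n. K * norm (s2 n - s1 n) + (A.obj x (s1 n) - A.env x) + (B.obj x (s2 n) - B.env x))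
        \<longlonglongrightarrow> K * norm (p2 - p1) + 0 + 0"
      by (intro tendsto_intros s1(2) s2(2) LIM_zero s1(3) s2(3))
  qed blast
  then have "(L * norm (p1 - p2)) * norm (p1 - p2) \<le> K * norm (p1 - p2)"
    by (simp add: norm_minus_commute power2_eq_square)
  then have "L * norm (p1 - p2) \<le> K"
    using \<open>0 \<le> K\<close> by (cases "p1 = p2") (simp_all add: mult_le_cancel_right_pos)
  moreover have "grad A.env x - grad B.env x = (2 * L) *\<^sub>R (p2 - p1)"
    using A.grad_env[OF p1] B.grad_env[OF p2] by (simp add: algebra_simps)
  ultimately show ?thesis
    using A.pos by (simp add: norm_minus_commute)
qed

section \<open>Taylor approximation of the inner maximization\<close>

lemma SUP_minus_lipschitz:
  fixes F :: "'a::real_normed_vector \<Rightarrow> 'b \<Rightarrow> real"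
  assumes "Y \<noteq> {}" and bdd: "\<And>x. x \<in> X \<Longrightarrow> bdd_above (F x ` Y)"
    and lip: "\<And>y x x'. y \<in> Y \<Longrightarrow> x \<in> X \<Longrightarrow> x' \<in> X \<Longrightarrow>
      \<bar>(F x' y - a x') - (F x y - a x)\<bar> \<le> K * norm (x' - x)"
    and x: "x \<in> X" "x' \<in> X"
  shows "\<bar>((SUP y\<in>Y. F x' y) - a x') - ((SUP y\<in>Y. F x y) - a x)\<bar> \<le> K * norm (x' - x)"
proof -
  have one_side: "(SUP y\<in>Y. F x2 y) - a x2 - ((SUP y\<in>Y. F x1 y) - a x1) \<le> K * norm (x' - x)"
    if x12: "x1 \<in> X" "x2 \<in> X" and lip12: "\<And>y. y \<in> Y \<Longrightarrow> F x2 y - a x2 - (F x1 y - a x1) \<le> K * norm (x' - x)"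
    for x1 x2
  proof -
    have "(SUP y\<in>Y. F x2 y) \<le> (SUP y\<in>Y. F x1 y) - a x1 + a x2 + K * norm (x' - x)"
    proof (rule cSUP_least[OF assms(1)])
      fix y assume y: "y \<in> Y"
      then show "F x2 y \<le> (SUP y\<in>Y. F x1 y) - a x1 + a x2 + K * norm (x' - x)"
        using cSUP_upper[OF y bdd[OF x12(1)]] lip12[OF y] by linarith
    qed
    then show ?thesis by linarith
  qed
  have "F x' y - a x' - (F x y - a x) \<le> K * norm (x' - x)" "F x y - a x - (F x' y - a x') \<le> K * norm (x' - x)"
    if "y \<in> Y" for y
    using lip[OF that x] by (simp_all add: abs_le_iff)
  with one_side[OF x] one_side[OF x(2,1)] show ?thesis
    by (simp add: abs_le_iff)
qed

text \<open>On the reals, the supremum of a set that is not bounded above is an unspecified junk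
  value, but one and the same for all such sets.\<close>

lemma Sup_not_bdd_above_eq:
  fixes S T :: "real set"
  assumes "\<not> bdd_above S" "\<not> bdd_above T"
  shows "Sup S = Sup T"
proof -
  have "(\<lambda>z. \<forall>x\<in>S. x \<le> z) = (\<lambda>z. \<forall>x\<in>T. x \<le> z)"
    using assms unfolding bdd_above_def by (intro ext) blast
  then show ?thesis unfolding Sup_real_def by simp
qed

locale taylor_minimax =
  fixes f :: "'a::euclidean_space \<Rightarrow> 'b::euclidean_space \<Rightarrow> real"
    and X :: "'a set" and Y :: "'b set"
    and D lam mu sigma tau :: real and rho :: ereal
    and k :: nat and yhat :: "'b"
    and Gx :: "'a \<Rightarrow> 'b \<Rightarrow> 'a"
    and Dy :: "nat \<Rightarrow> 'a \<Rightarrow> 'b \<Rightarrow> 'b list \<Rightarrow> real"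
    and Dxy :: "'a \<Rightarrow> 'b \<Rightarrow> 'a \<Rightarrow> 'b list \<Rightarrow> real"
  assumes X: "convex X" "interior X \<noteq> {}"
    and Y: "convex Y" "compact Y" "interior Y \<noteq> {}"
    and D: "diameter Y \<le> D"
    and yhat: "yhat \<in> Y"
    and nonneg: "0 \<le> lam" "0 \<le> mu" "0 \<le> sigma" "0 \<le> tau"
    and Gx_deriv: "\<And>x y. x \<in> X \<Longrightarrow> y \<in> Y \<Longrightarrow>
          ((\<lambda>x'. f x' y) has_derivative (\<lambda>h. Gx x y \<bullet> h)) (at x within X)"
    and Gx_lip: "\<And>x x' y y'. x \<in> X \<Longrightarrow> x' \<in> X \<Longrightarrow> y \<in> Y \<Longrightarrow> y' \<in> Y \<Longrightarrow>
          norm (Gx x' y' - Gx x y) \<le> lam * norm (x' - x) + mu * norm (y' - y)"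
    and Dy0: "\<And>x y. x \<in> X \<Longrightarrow> y \<in> Y \<Longrightarrow> Dy 0 x y [] = f x y"
    and Dy_deriv: "\<And>j x y vs. j < k \<Longrightarrow> x \<in> X \<Longrightarrow> y \<in> Y \<Longrightarrow> length vs = j \<Longrightarrow>
          ((\<lambda>y'. Dy j x y' vs) has_derivative (\<lambda>h. Dy (Suc j) x y (h # vs))) (at y within Y)"
    and Dy_lip: "\<And>x x' y y'. x \<in> X \<Longrightarrow> x' \<in> X \<Longrightarrow> y \<in> Y \<Longrightarrow> y' \<in> Y \<Longrightarrow>
          ereal (tnorm k (\<lambda>vs. Dy k x' y' vs - Dy k x y vs))
            \<le> rho * ereal (norm (y' - y)) + ereal (sigma * norm (x' - x))"
    and Dxy_deriv: "k \<ge> 1 \<Longrightarrow> x \<in> X \<Longrightarrow> y \<in> Y \<Longrightarrow> length vs = k \<Longrightarrow>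
          ((\<lambda>x'. Dy k x' y vs) has_derivative (\<lambda>u. Dxy x y u vs)) (at x within X)"
    and Dxy_lip: "k \<ge> 1 \<Longrightarrow> x \<in> X \<Longrightarrow> x' \<in> X \<Longrightarrow> y \<in> Y \<Longrightarrow>
          tnorm_x k (\<lambda>u vs. Dxy x' y u vs - Dxy x y u vs) \<le> tau * norm (x' - x)"
begin

abbreviation f_hat :: "'a \<Rightarrow> 'b \<Rightarrow> real" where
  "f_hat x y \<equiv> \<Sum>j\<le>k. Dy j x yhat (replicate j (y - yhat)) / fact j"

abbreviation phi :: "'a \<Rightarrow> real" where
  "phi x \<equiv> SUP y\<in>Y. f x y"

abbreviation phi_hat :: "'a \<Rightarrow> real" where
  "phi_hat x \<equiv> SUP y\<in>Y. f_hat x y"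

abbreviation lam_bar :: real where
  "lam_bar \<equiv> lam + (if k \<ge> 1 then 2 * tau * D ^ k / fact k else 0)"

abbreviation gap_lip :: real where
  "gap_lip \<equiv> if k \<ge> 1 then 2 * mu * D + 2 * sigma * D ^ k / fact k else min (mu * D) (2 * sigma)"

lemma X_nonempty: "X \<noteq> {}"
  using X(2) interior_subset by blast

lemma norm_minus_yhat_le: "y \<in> Y \<Longrightarrow> norm (y - yhat) \<le> D"
  using diameter_bounded_bound[OF compact_imp_bounded[OF Y(2)], of y yhat] yhat D
  by (simp add: dist_norm)

lemma D_nonneg: "0 \<le> D"
  using norm_minus_yhat_le[OF yhat] by simp

lemma Dy_multilinear: "j \<le> k \<Longrightarrow> x \<in> X \<Longrightarrow> y \<in> Y \<Longrightarrow> multilinear j (Dy j x y)"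
proof (induction j arbitrary: y)
  case (Suc j)
  show ?case
    unfolding multilinear_Suc
  proof (intro conjI allI impI)
    fix ws :: "'b list" assume "length ws = j"
    from Dy_deriv[OF _ Suc.prems(2,3) this] Suc.prems(1)
    show "linear (\<lambda>h. Dy (Suc j) x y (h # ws))"
      using has_derivative_linear by force
  next
    fix h :: 'b
    show "multilinear j (\<lambda>ws. Dy (Suc j) x y (h # ws))"
    proof (rule multilinear_derivative[OF Y(1,3) Suc.prems(3), where F = "\<lambda>y'. Dy j x y'"])
      show "multilinear j (Dy j x y')" if "y' \<in> Y" for y'
        using Suc.IH[OF _ Suc.prems(2) that] Suc.prems(1) by simp
      show "((\<lambda>y'. Dy j x y' vs) has_derivative (\<lambda>h. Dy (Suc j) x y (h # vs))) (at y within Y)"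
        if "length vs = j" for vs
        using Dy_deriv[OF _ Suc.prems(2,3) that] Suc.prems(1) by simp
    qed
  qed
qed simp

lemma Dxy_multilinear:
  assumes "k \<ge> 1" "x \<in> X" "y \<in> Y"
  shows "multilinear k (Dxy x y u)"
proof (rule multilinear_derivative[OF X assms(2), where F = "\<lambda>x'. Dy k x' y"])
  show "multilinear k (Dy k x' y)" if "x' \<in> X" for x'
    using Dy_multilinear[OF _ that assms(3)] by simp
  show "((\<lambda>x'. Dy k x' y vs) has_derivative (\<lambda>u. Dxy x y u vs)) (at x within X)"
    if "length vs = k" for vs
    using Dxy_deriv[OF assms that] .
qed

lemma Dy_replicate_diff_x_le:
  assumes "x \<in> X" "x' \<in> X" "z \<in> Y"
  shows "\<bar>Dy k x' z (replicate k d) - Dy k x z (replicate k d)\<bar> \<le> sigma * norm (x' - x) * norm d ^ k"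
proof (rule multilinear_replicate_bound)
  show "multilinear k (\<lambda>vs. Dy k x' z vs - Dy k x z vs)"
    using multilinear_lincomb[of k "Dy k x' z" "Dy k x z" 1 "-1"] Dy_multilinear assms by simp
  have "tnorm k (\<lambda>vs. Dy k x' z vs - Dy k x z vs) \<le> sigma * norm (x' - x)"
    using Dy_lip[OF assms(1,2,3,3)] by (simp add: zero_ereal_def[symmetric])
  then show "\<bar>Dy k x' z vs - Dy k x z vs\<bar> \<le> sigma * norm (x' - x)"
    if "length vs = k" "\<forall>v\<in>set vs. norm v \<le> 1" for vs
    using tnorm_upper[OF \<open>multilinear k _\<close> that] by linarith
qed

lemma Dxy_diff_le:
  assumes k: "k \<ge> 1" and x: "x1 \<in> X" "x2 \<in> X" and z: "z \<in> Y"
    and vs: "length vs = k" "\<forall>v\<in>set vs. norm v \<le> 1"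
  shows "\<bar>Dxy x2 z w vs - Dxy x1 z w vs\<bar> \<le> tau * norm (x2 - x1) * norm w"
proof -
  define T where "T u vs = Dxy x2 z u vs - Dxy x1 z u vs" for u vs
  have lin: "linear (\<lambda>u. T u vs)" if "length vs = k" for vs
    unfolding T_def using has_derivative_linear[OF Dxy_deriv[OF k _ z that]] x
    by (intro linear_compose_sub) auto
  have ml: "multilinear k (T u)" for u
    using multilinear_lincomb[of k "Dxy x2 z u" "Dxy x1 z u" 1 "-1"] Dxy_multilinear[OF k] x z
    by (simp add: T_def[abs_def])
  show ?thesis
  proof (cases "w = 0")
    case True
    then show ?thesis using linear_0[OF lin[OF vs(1)]] by (simp add: T_def)
  next
    case False
    have "T w vs = norm w * T ((1 / norm w) *\<^sub>R w) vs"
      using linear_scale[OF lin[OF vs(1)], of "norm w" "(1 / norm w) *\<^sub>R w"] False by simp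
    also have "\<bar>\<dots>\<bar> \<le> norm w * tnorm_x k T"
      using tnorm_x_upper[OF lin ml _ vs] False by (simp add: abs_mult mult_left_mono)
    also have "\<dots> \<le> norm w * (tau * norm (x2 - x1))"
      using Dxy_lip[OF k x z] unfolding T_def[abs_def] by (simp add: mult_left_mono)
    finally show ?thesis by (simp add: T_def mult_ac)
  qed
qed

lemma Dy_replicate_deviation_le:
  assumes k: "k \<ge> 1" and uv: "u \<in> X" "v \<in> X" and z: "z \<in> Y" and t: "t \<in> {0..1}"
  shows "\<bar>(1 - t) * Dy k u z (replicate k d) + t * Dy k v z (replicate k d) - Dy k (linepath u v t) z (replicate k d)\<bar>
    \<le> tau / 2 * t * (1 - t) * (norm (v - u))\<^sup>2 * norm d ^ k"
proof -
  let ?T = "\<lambda>vs. (1 - t) * Dy k u z vs + t * Dy k v z vs - Dy k (linepath u v t) z vs"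
  have "multilinear k (\<lambda>vs. 1 * ((1 - t) * Dy k u z vs + t * Dy k v z vs) + (-1) * Dy k (linepath u v t) z vs)"
    using Dy_multilinear uv z linepath_mem_convex[OF X(1) uv t] by (intro multilinear_lincomb) auto
  then have "multilinear k ?T"
    by simp
  moreover have "\<bar>?T vs\<bar> \<le> tau / 2 * t * (1 - t) * (norm (v - u))\<^sup>2"
    if "length vs = k" "\<forall>v\<in>set vs. norm v \<le> 1" for vs
    using Dxy_deriv[OF k _ z that(1)] Dxy_diff_le[OF k _ _ z that]
    by (intro lipschitz_derivative_deviation(1)[OF X(1) uv _ _ t]) auto
  ultimately show ?thesis
    by (rule multilinear_replicate_bound)
qed

lemma Gx_inner_lipschitz:
  assumes "y \<in> Y" "a \<in> X" "b \<in> X"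
  shows "\<bar>Gx a y \<bullet> w - Gx b y \<bullet> w\<bar> \<le> lam * norm (a - b) * norm w"
proof -
  have "\<bar>Gx a y \<bullet> w - Gx b y \<bullet> w\<bar> \<le> norm (Gx a y - Gx b y) * norm w"
    by (metis Cauchy_Schwarz_ineq2 inner_diff_left)
  also have "\<dots> \<le> lam * norm (a - b) * norm w"
    using Gx_lip[OF assms(3,2,1,1)] by (simp add: mult_right_mono)
  finally show ?thesis .
qed

lemma f_weakly_convex: "y \<in> Y \<Longrightarrow> weakly_convex_on X lam (\<lambda>x. f x y)"
  unfolding weakly_convex_on_iff
proof (intro conjI ballI X(1))
  fix u v and t :: real assume y: "y \<in> Y" and uvt: "u \<in> X" "v \<in> X" "t \<in> {0..1}"
  have "\<bar>(1 - t) * f u y + t * f v y - f (linepath u v t) y\<bar> \<le> lam / 2 * t * (1 - t) * (norm (v - u))\<^sup>2"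
    using Gx_deriv[OF _ y] Gx_inner_lipschitz[OF y]
    by (intro lipschitz_derivative_deviation(1)[OF X(1) uvt(1,2) _ _ uvt(3)]) auto
  then show "f (linepath u v t) y \<le> (1 - t) * f u y + t * f v y + lam / 2 * t * (1 - t) * (norm (v - u))\<^sup>2"
    unfolding abs_le_iff by linarith
qed

lemma f_yhat_minorant:
  assumes "lam \<le> L"
  shows "\<exists>A B. \<forall>u\<in>X. A - B * norm u - L / 2 * (norm u)\<^sup>2 \<le> f u yhat"
proof -
  obtain x0 where x0: "x0 \<in> X" using X_nonempty by blast
  define g where "g = Gx x0 yhat"
  have "f x0 yhat - norm g * norm x0 - L / 2 * (norm x0)\<^sup>2 - (norm g + L * norm x0) * norm u - L / 2 * (norm u)\<^sup>2
      \<le> f u yhat" if u: "u \<in> X" for u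
  proof -
    have "\<bar>f u yhat - f x0 yhat - g \<bullet> (u - x0)\<bar> \<le> lam / 2 * (norm (u - x0))\<^sup>2"
      unfolding g_def using Gx_deriv[OF _ yhat] Gx_inner_lipschitz[OF yhat]
      by (intro lipschitz_derivative_deviation(2)[OF X(1) x0 u]) auto
    moreover have "\<bar>g \<bullet> (u - x0)\<bar> \<le> norm g * (norm u + norm x0)"
      using Cauchy_Schwarz_ineq2[of g "u - x0"] norm_triangle_ineq4[of u x0]
      by (meson mult_left_mono norm_ge_zero order_trans)
    moreover have "lam / 2 * (norm (u - x0))\<^sup>2 \<le> L / 2 * (norm u + norm x0)\<^sup>2"
      using assms nonneg(1) norm_triangle_ineq4[of u x0]
      by (intro mult_mono power_mono) auto
    moreover have "L / 2 * (norm u + norm x0)\<^sup>2 = L / 2 * (norm u)\<^sup>2 + L * norm x0 * norm u + L / 2 * (norm x0)\<^sup>2"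
      by (simp add: power2_eq_square algebra_simps)
    ultimately show ?thesis
      unfolding abs_le_iff by (simp add: algebra_simps)
  qed
  then show ?thesis by blast
qed

lemma f_minus_f_yhat_lipschitz:
  assumes "y \<in> Y" "x \<in> X" "x' \<in> X"
  shows "\<bar>(f x' y - f x' yhat) - (f x y - f x yhat)\<bar> \<le> mu * D * norm (x' - x)"
proof -
  have "norm ((f x' y - f x' yhat) - (f x y - f x yhat)) \<le> mu * D * norm (x' - x)"
  proof (rule differentiable_bound[OF X(1) _ _ assms(3,2)])
    show "((\<lambda>z. f z y - f z yhat) has_derivative (\<lambda>h. (Gx z y - Gx z yhat) \<bullet> h)) (at z within X)"
      if "z \<in> X" for z
      using has_derivative_diff[OF Gx_deriv[OF that assms(1)] Gx_deriv[OF that yhat]]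
      by (simp add: inner_diff_left)
    show "onorm (\<lambda>h. (Gx z y - Gx z yhat) \<bullet> h) \<le> mu * D" if "z \<in> X" for z
    proof (rule onorm_le)
      fix h
      have "norm (Gx z y - Gx z yhat) \<le> mu * D"
        using Gx_lip[OF that that yhat assms(1)] norm_minus_yhat_le[OF assms(1)] nonneg(2)
        by (simp add: order_trans mult_left_mono)
      then show "norm ((Gx z y - Gx z yhat) \<bullet> h) \<le> mu * D * norm h"
        using Cauchy_Schwarz_ineq2[of "Gx z y - Gx z yhat" h] mult_right_mono[of _ _ "norm h"]
        by (simp add: order_trans)
    qed
  qed
  then show ?thesis by simp
qed

lemma taylor_error_lincomb:
  fixes a :: "'i \<Rightarrow> real" and p :: "'i \<Rightarrow> 'a"
  assumes I: "finite I" "\<And>i. i \<in> I \<Longrightarrow> p i \<in> X" and y: "y \<in> Y"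
    and B: "\<And>z. z \<in> Y \<Longrightarrow> \<bar>\<Sum>i\<in>I. a i *
      (Dy k (p i) z (replicate k (y - yhat)) - Dy k (p i) yhat (replicate k (y - yhat)))\<bar> \<le> B"
  shows "\<bar>\<Sum>i\<in>I. a i * (f (p i) y - f_hat (p i) y)\<bar> \<le> B / fact k"
proof -
  define G where "G j z vs = (\<Sum>i\<in>I. a i * Dy j (p i) z vs)" for j z vs
  have "\<bar>G 0 y [] - (\<Sum>j\<le>k. G j yhat (replicate j (y - yhat)) / fact j)\<bar> \<le> B / fact k"
  proof (rule Taylor_bound_along_segment[OF Y(1) yhat y])
    show "((\<lambda>z'. G j z' vs) has_derivative (\<lambda>h. G (Suc j) z (h # vs))) (at z within Y)"
      if "j < k" "z \<in> Y" "length vs = j" for j z vs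
      unfolding G_def using I(2) that
      by (intro has_derivative_sum has_derivative_mult_right Dy_deriv) auto
    show "\<bar>G k z (replicate k (y - yhat)) - G k yhat (replicate k (y - yhat))\<bar> \<le> B" if "z \<in> Y" for z
      using B[OF that] by (simp add: G_def sum_subtractf right_diff_distrib)
  qed
  moreover have "G 0 y [] = (\<Sum>i\<in>I. a i * f (p i) y)"
    unfolding G_def using Dy0 I(2) y by simp
  moreover have "(\<Sum>j\<le>k. G j yhat (replicate j (y - yhat)) / fact j) = (\<Sum>i\<in>I. a i * f_hat (p i) y)"
    unfolding G_def by (simp add: sum_divide_distrib sum_distrib_left sum.swap[of _ I] mult.assoc)
  ultimately show ?thesis
    by (simp add: sum_subtractf right_diff_distrib)
qed

lemma f_hat_yhat: "x \<in> X \<Longrightarrow> f_hat x yhat = f x yhat"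
proof -
  assume x: "x \<in> X"
  have "Dy (Suc j) x yhat (replicate (Suc j) 0) = 0" if "j < k" for j
    using multilinear_replicate_0[OF Dy_multilinear[OF _ x yhat], of "Suc j"] that
    by (simp del: replicate_Suc)
  then show ?thesis
    using Dy0[OF x yhat] by (simp add: sum.atMost_shift del: replicate_Suc)
qed

lemma f_hat_bdd_above: "x \<in> X \<Longrightarrow> bdd_above ((\<lambda>y. f_hat x y) ` Y)"
proof -
  assume x: "x \<in> X"
  have "\<forall>j. \<exists>B. j \<le> k \<longrightarrow> (\<forall>vs. length vs = j \<longrightarrow> (\<forall>v\<in>set vs. norm v \<le> 1) \<longrightarrow> \<bar>Dy j x yhat vs\<bar> \<le> B)"
    using multilinear_bounded[OF Dy_multilinear[OF _ x yhat]] by blast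
  then obtain B where B: "\<And>j vs. j \<le> k \<Longrightarrow> length vs = j \<Longrightarrow> \<forall>v\<in>set vs. norm v \<le> 1 \<Longrightarrow> \<bar>Dy j x yhat vs\<bar> \<le> B j"
    by metis
  have "f_hat x y \<le> (\<Sum>j\<le>k. B j * D ^ j / fact j)" if y: "y \<in> Y" for y
  proof -
    have "f_hat x y \<le> (\<Sum>j\<le>k. \<bar>Dy j x yhat (replicate j (y - yhat)) / fact j\<bar>)"
      by (rule order_trans[OF abs_ge_self sum_abs])
    also have "\<dots> \<le> (\<Sum>j\<le>k. B j * D ^ j / fact j)"
    proof (rule sum_mono)
      fix j assume "j \<in> {..k}"
      then have j: "j \<le> k" by simp
      have "\<bar>Dy j x yhat (replicate j (y - yhat))\<bar> \<le> B j * norm (y - yhat) ^ j"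
        using B[OF j] by (intro multilinear_replicate_bound[OF Dy_multilinear[OF j x yhat]])
      also have "\<dots> \<le> B j * D ^ j"
        using B[OF j, of "replicate j 0"] norm_minus_yhat_le[OF y]
        by (intro mult_left_mono power_mono) auto
      finally show "\<bar>Dy j x yhat (replicate j (y - yhat)) / fact j\<bar> \<le> B j * D ^ j / fact j"
        by (simp add: divide_right_mono)
    qed
    finally show ?thesis .
  qed
  then show ?thesis by (intro bdd_aboveI2)
qed

lemma f_bdd_above:
  assumes "k \<ge> 1" "x \<in> X"
  shows "bdd_above ((\<lambda>y. f x y) ` Y)"
proof -
  have "continuous_on Y (\<lambda>y. Dy 0 x y [])"
    using Dy_deriv[of 0 x _ "[]"] assms
    by (auto simp: continuous_on_eq_continuous_within intro: has_derivative_continuous)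
  then have "continuous_on Y (\<lambda>y. f x y)"
    by (rule continuous_on_eq) (use Dy0 assms(2) in auto)
  then show ?thesis
    using compact_continuous_image[OF _ Y(2)] by (intro bounded_imp_bdd_above compact_imp_bounded)
qed

lemma tau_term_nonneg: "0 \<le> tau * D ^ k / fact k"
  using nonneg(4) D_nonneg by simp

lemma f_hat_weakly_convex:
  assumes k: "k \<ge> 1" and y: "y \<in> Y"
  shows "weakly_convex_on X lam_bar (\<lambda>x. f_hat x y)"
  unfolding weakly_convex_on_iff
proof (intro conjI ballI X(1))
  fix u v and t :: real assume uv: "u \<in> X" "v \<in> X" and t: "t \<in> {0..1}"
  define w where "w = linepath u v t"
  have w: "w \<in> X" unfolding w_def using linepath_mem_convex[OF X(1) uv t] .
  define N where "N = t * (1 - t) * (norm (v - u))\<^sup>2"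
  define R where "R = tau * N * D ^ k / fact k"
  have N: "0 \<le> N" using t by (simp add: N_def)
  let ?d = "y - yhat" and ?e = "\<lambda>x. f x y - f_hat x y"
  \<comment> \<open>the Taylor error is nearly affine along segments, by the x-regularity of the k-th derivative\<close>
  have "\<bar>\<Sum>i\<in>{0, 1, 2::nat}. [1 - t, t, -1] ! i * ?e ([u, v, w] ! i)\<bar> \<le> tau * N * norm ?d ^ k / fact k"
  proof (rule taylor_error_lincomb)
    show "[u, v, w] ! i \<in> X" if "i \<in> {0, 1, 2}" for i
      using that uv w by auto
    fix z assume z: "z \<in> Y"
    show "\<bar>\<Sum>i\<in>{0, 1, 2::nat}. [1 - t, t, -1] ! i *
        (Dy k ([u, v, w] ! i) z (replicate k ?d) - Dy k ([u, v, w] ! i) yhat (replicate k ?d))\<bar>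
      \<le> tau * N * norm ?d ^ k"
      using Dy_replicate_deviation_le[OF k uv z t, of ?d] Dy_replicate_deviation_le[OF k uv yhat t, of ?d]
      unfolding w_def[symmetric] N_def abs_le_iff by (simp add: algebra_simps)
  qed (use y in auto)
  also have "tau * N * norm ?d ^ k / fact k \<le> R"
    unfolding R_def using norm_minus_yhat_le[OF y] nonneg(4) N
    by (intro divide_right_mono mult_left_mono power_mono) auto
  finally have taylor: "\<bar>(1 - t) * ?e u + t * ?e v - ?e w\<bar> \<le> R"
    by simp
  have f: "f w y \<le> (1 - t) * f u y + t * f v y + lam / 2 * N"
    using weakly_convex_onD[OF f_weakly_convex[OF y] uv t] by (simp add: w_def N_def mult_ac)
  have lam_bar: "lam_bar = lam + 2 * tau * D ^ k / fact k"
    using k by simp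
  have "lam_bar / 2 * t * (1 - t) * (norm (v - u))\<^sup>2 = lam / 2 * N + R"
    unfolding lam_bar by (simp add: N_def R_def field_simps)
  then show "f_hat (linepath u v t) y
      \<le> (1 - t) * f_hat u y + t * f_hat v y + lam_bar / 2 * t * (1 - t) * (norm (v - u))\<^sup>2"
    using taylor f unfolding w_def[symmetric] abs_le_iff right_diff_distrib by linarith
qed

lemma lam_le_lam_bar: "lam \<le> lam_bar"
  using tau_term_nonneg by simp

lemma phi_hat_weakly_convex: "weakly_convex_on X lam_bar phi_hat"
proof (cases "k \<ge> 1")
  case True
  show ?thesis
    using yhat f_hat_bdd_above f_hat_weakly_convex[OF True]
    by (intro weakly_convex_on_SUP[OF X(1)]) auto
next
  case False
  then have k0: "k = 0" by simp
  have "Y \<noteq> {}" using yhat by blast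
  then have "phi_hat x = f x yhat" if "x \<in> X" for x
    using Dy0[OF that yhat] by (simp add: k0)
  moreover have "lam_bar = lam" by (simp add: k0)
  ultimately show ?thesis
    using weakly_convex_on_cong[OF f_weakly_convex[OF yhat], of phi_hat] by simp
qed

lemma phi_weakly_convex:
  assumes "\<And>x. x \<in> X \<Longrightarrow> bdd_above ((\<lambda>y. f x y) ` Y)"
  shows "weakly_convex_on X lam_bar phi"
  using yhat assms f_weakly_convex lam_le_lam_bar
  by (intro weakly_convex_on_mono[OF weakly_convex_on_SUP[OF X(1)]]) auto

lemma phi_hat_envelope:
  assumes "lam_bar > 0"
  shows "weakly_convex_envelope phi_hat X lam_bar"
proof
  obtain A B where "\<forall>u\<in>X. A - B * norm u - lam_bar / 2 * (norm u)\<^sup>2 \<le> f u yhat"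
    using f_yhat_minorant[OF lam_le_lam_bar] by blast
  moreover have "f u yhat \<le> phi_hat u" if "u \<in> X" for u
    using cSUP_upper[OF yhat f_hat_bdd_above[OF that]] f_hat_yhat[OF that] by simp
  ultimately show "\<exists>A B. \<forall>u\<in>X. A - B * norm u - lam_bar / 2 * (norm u)\<^sup>2 \<le> phi_hat u"
    by (meson order_trans)
qed (use phi_hat_weakly_convex X_nonempty assms in auto)

lemma phi_envelope:
  assumes "lam_bar > 0" and bdd: "\<And>x. x \<in> X \<Longrightarrow> bdd_above ((\<lambda>y. f x y) ` Y)"
  shows "weakly_convex_envelope phi X lam_bar"
proof
  obtain A B where "\<forall>u\<in>X. A - B * norm u - lam_bar / 2 * (norm u)\<^sup>2 \<le> f u yhat"
    using f_yhat_minorant[OF lam_le_lam_bar] by blast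
  moreover have "f u yhat \<le> phi u" if "u \<in> X" for u
    using cSUP_upper[OF yhat bdd[OF that]] by simp
  ultimately show "\<exists>A B. \<forall>u\<in>X. A - B * norm u - lam_bar / 2 * (norm u)\<^sup>2 \<le> phi u"
    by (meson order_trans)
qed (use phi_weakly_convex[OF bdd] X_nonempty assms in auto)

lemma f_lipschitz_if_k_0:
  assumes "k = 0" "y \<in> Y" "x \<in> X" "x' \<in> X"
  shows "\<bar>f x' y - f x y\<bar> \<le> sigma * norm (x' - x)"
  using Dy_replicate_diff_x_le[OF assms(3,4,2), of 0] Dy0 assms by simp

lemma f_hat_minus_f_yhat_lipschitz:
  assumes y: "y \<in> Y" and x: "x \<in> X" "x' \<in> X"
  shows "\<bar>(f_hat x' y - f x' yhat) - (f_hat x y - f x yhat)\<bar> \<le> (mu * D + 2 * sigma * D ^ k / fact k) * norm (x' - x)"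
proof -
  let ?d = "y - yhat" and ?e = "\<lambda>x. f x y - f_hat x y"
  have "\<bar>\<Sum>i\<in>{0, 1::nat}. [1, -1] ! i * ?e ([x', x] ! i)\<bar> \<le> 2 * sigma * norm (x' - x) * norm ?d ^ k / fact k"
  proof (rule taylor_error_lincomb)
    show "[x', x] ! i \<in> X" if "i \<in> {0, 1}" for i
      using that x by auto
    fix z assume z: "z \<in> Y"
    show "\<bar>\<Sum>i\<in>{0, 1::nat}. [1, -1] ! i *
        (Dy k ([x', x] ! i) z (replicate k ?d) - Dy k ([x', x] ! i) yhat (replicate k ?d))\<bar>
      \<le> 2 * sigma * norm (x' - x) * norm ?d ^ k"
      using Dy_replicate_diff_x_le[OF x z, of ?d] Dy_replicate_diff_x_le[OF x yhat, of ?d]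
      unfolding abs_le_iff by simp
  qed (use y in auto)
  also have "\<dots> \<le> 2 * sigma * norm (x' - x) * D ^ k / fact k"
    using norm_minus_yhat_le[OF y] nonneg(3)
    by (intro divide_right_mono mult_left_mono power_mono) auto
  finally have "\<bar>?e x' - ?e x\<bar> \<le> 2 * sigma * D ^ k / fact k * norm (x' - x)"
    by (simp add: mult_ac)
  with f_minus_f_yhat_lipschitz[OF assms] show ?thesis
    unfolding abs_le_iff by (simp add: algebra_simps)
qed

lemma phi_minus_phi_hat_lipschitz:
  assumes bdd: "\<And>x. x \<in> X \<Longrightarrow> bdd_above ((\<lambda>y. f x y) ` Y)" and uv: "u \<in> X" "v \<in> X"
  shows "\<bar>(phi u - phi_hat u) - (phi v - phi_hat v)\<bar> \<le> gap_lip * norm (u - v)"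
proof -
  have Y: "Y \<noteq> {}" using yhat by blast
  have phi: "\<bar>(phi u - f u yhat) - (phi v - f v yhat)\<bar> \<le> mu * D * norm (u - v)"
    using SUP_minus_lipschitz[OF Y bdd f_minus_f_yhat_lipschitz uv(2,1)] by simp
  show ?thesis
  proof (cases "k \<ge> 1")
    case True
    have "\<bar>(phi_hat u - f u yhat) - (phi_hat v - f v yhat)\<bar> \<le> (mu * D + 2 * sigma * D ^ k / fact k) * norm (u - v)"
      using SUP_minus_lipschitz[OF Y f_hat_bdd_above f_hat_minus_f_yhat_lipschitz uv(2,1)] by simp
    with phi True show ?thesis
      unfolding abs_le_iff by (simp add: algebra_simps)
  next
    case False
    then have k0: "k = 0" by simp
    have phi_hat: "phi_hat x = f x yhat" if "x \<in> X" for x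
      using Y Dy0[OF that yhat] by (simp add: k0)
    have "\<bar>(f x' y - 0) - (f x y - 0)\<bar> \<le> sigma * norm (x' - x)"
      if "y \<in> Y" "x \<in> X" "x' \<in> X" for x x' y
      using f_lipschitz_if_k_0[OF k0 that] by simp
    from SUP_minus_lipschitz[OF Y bdd this uv(2,1)]
    have "\<bar>phi u - phi v\<bar> \<le> sigma * norm (u - v)"
      by simp
    moreover have "\<bar>f u yhat - f v yhat\<bar> \<le> sigma * norm (u - v)"
      using f_lipschitz_if_k_0[OF k0 yhat uv(2,1)] .
    ultimately have "\<bar>(phi u - phi_hat u) - (phi v - phi_hat v)\<bar> \<le> 2 * sigma * norm (u - v)"
      unfolding phi_hat[OF uv(1)] phi_hat[OF uv(2)] abs_le_iff by linarith
    with phi show ?thesis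
      unfolding phi_hat[OF uv(1)] phi_hat[OF uv(2)] using k0 by (simp add: min_mult_distrib_right min_def)
  qed
qed

lemma phi_constant_if_unbounded:
  assumes "x0 \<in> X" "\<not> bdd_above ((\<lambda>y. f x0 y) ` Y)" "x \<in> X"
  shows "k = 0" "phi x = phi x0"
proof -
  show k0: "k = 0"
    using assms f_bdd_above by (cases k) auto
  have "\<not> bdd_above ((\<lambda>y. f x y) ` Y)"
  proof
    assume "bdd_above ((\<lambda>y. f x y) ` Y)"
    then obtain M where "\<And>y. y \<in> Y \<Longrightarrow> f x y \<le> M" by (auto simp: bdd_above_def)
    then have "\<And>y. y \<in> Y \<Longrightarrow> f x0 y \<le> M + sigma * norm (x0 - x)"
      using f_lipschitz_if_k_0[OF k0 _ assms(3,1)] by (fastforce simp: abs_le_iff)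
    then show False using assms(2) by (auto simp: bdd_above_def)
  qed
  then show "phi x = phi x0"
    using assms(2) by (rule Sup_not_bdd_above_eq)
qed

lemma gap_lip_bounds:
  assumes "0 \<le> eps"
  shows "0 \<le> gap_lip" "2 * gap_lip + 4 * eps
    \<le> (if k \<ge> 1 then 4 * (mu * D + 2 * sigma * D ^ k / fact k + eps) else 4 * (min (mu * D) (2 * sigma) + eps))"
proof -
  define S where "S = sigma * D ^ k / fact k"
  have terms: "0 \<le> S" "0 \<le> mu * D" "0 \<le> min (mu * D) (2 * sigma)"
    using nonneg D_nonneg by (simp_all add: S_def)
  show "0 \<le> gap_lip" using terms by (simp add: S_def)
  show "2 * gap_lip + 4 * eps
    \<le> (if k \<ge> 1 then 4 * (mu * D + 2 * sigma * D ^ k / fact k + eps) else 4 * (min (mu * D) (2 * sigma) + eps))"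
  proof (cases "k \<ge> 1")
    case True
    then have "gap_lip = 2 * (mu * D) + 2 * S"
      "(if k \<ge> 1 then 4 * (mu * D + 2 * sigma * D ^ k / fact k + eps) else 4 * (min (mu * D) (2 * sigma) + eps))
        = 4 * (mu * D + 2 * S + eps)"
      by (simp_all add: S_def)
    with assms terms show ?thesis by simp
  qed (use assms terms in simp)
qed

theorem grad_moreau_phi_minus_phi_hat_le:
  assumes xstar: "xstar \<in> X" and small: "norm (grad (moreau phi_hat X (2 * lam_bar)) xstar) \<le> eps"
  shows "norm (grad (moreau phi X (2 * lam_bar)) xstar - grad (moreau phi_hat X (2 * lam_bar)) xstar)
    \<le> (if k \<ge> 1 then 4 * (mu * D + 2 * sigma * D ^ k / fact k + eps) else 4 * (min (mu * D) (2 * sigma) + eps))"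
    (is "?lhs \<le> ?rhs")
proof -
  have eps: "0 \<le> eps" using small norm_ge_zero order_trans by blast
  note K = gap_lip_bounds[OF eps]
  have lam_bar: "0 \<le> lam_bar" using nonneg(1) tau_term_nonneg by simp
  consider "lam_bar = 0" | "lam_bar > 0" "\<forall>x\<in>X. bdd_above ((\<lambda>y. f x y) ` Y)"
    | x0 where "lam_bar > 0" "x0 \<in> X" "\<not> bdd_above ((\<lambda>y. f x0 y) ` Y)"
    using lam_bar by force
  then show ?thesis
  proof cases
    case 1
    then show ?thesis using K eps by (simp add: grad_moreau_0)
  next
    case 2
    have bdd: "bdd_above ((\<lambda>y. f x y) ` Y)" if "x \<in> X" for x
      using 2(2) that by (rule bspec)
    have "?lhs \<le> 2 * gap_lip"
    proof (rule grad_moreau_diff_le[OF phi_envelope[OF 2(1) bdd] phi_hat_envelope[OF 2(1)] K(1)])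
      show "\<bar>(phi u - phi_hat u) - (phi v - phi_hat v)\<bar> \<le> gap_lip * norm (u - v)" if "u \<in> X" "v \<in> X" for u v
        by (rule phi_minus_phi_hat_lipschitz[OF _ that]) (fact bdd)
    qed
    then show ?thesis using K eps by linarith
  next
    case 3
    have "moreau phi X (2 * lam_bar) = moreau (\<lambda>_. phi x0) X (2 * lam_bar)"
      using phi_constant_if_unbounded(2)[OF 3(2,3)] by (simp add: moreau_def fun_eq_iff)
    then have "grad (moreau phi X (2 * lam_bar)) xstar = 0"
      using grad_moreau_const[OF xstar] lam_bar by simp
    then have "?lhs = norm (grad (moreau phi_hat X (2 * lam_bar)) xstar)"
      by simp
    then show ?thesis using small K eps by linarith
  qed
qed

end

theorem proposition2:
  fixes f :: "'a::euclidean_space \<Rightarrow> 'b::euclidean_space \<Rightarrow> real"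
    and X :: "'a set" and Y :: "'b set"
    and D lam mu sigma tau eps :: real and rho :: ereal
    and k :: nat and yhat :: "'b" and xstar :: "'a"
    and Gx :: "'a \<Rightarrow> 'b \<Rightarrow> 'a"
    and Dy :: "nat \<Rightarrow> 'a \<Rightarrow> 'b \<Rightarrow> 'b list \<Rightarrow> real"
    and Dxy :: "'a \<Rightarrow> 'b \<Rightarrow> 'a \<Rightarrow> 'b list \<Rightarrow> real"
  assumes X: "convex X" "interior X \<noteq> {}"
    and Y: "convex Y" "compact Y" "interior Y \<noteq> {}"
    and D: "diameter Y \<le> D"
    and yhat: "yhat \<in> Y"
    and nonneg: "0 \<le> lam" "0 \<le> mu" "0 \<le> sigma" "0 \<le> tau"
    \<comment> \<open>(i) gradient in x exists and is Lipschitz\<close>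
    and Gx_deriv: "\<And>x y. x \<in> X \<Longrightarrow> y \<in> Y \<Longrightarrow>
          ((\<lambda>x'. f x' y) has_derivative (\<lambda>h. Gx x y \<bullet> h)) (at x within X)"
    and Gx_lip: "\<And>x x' y y'. x \<in> X \<Longrightarrow> x' \<in> X \<Longrightarrow> y \<in> Y \<Longrightarrow> y' \<in> Y \<Longrightarrow>
          norm (Gx x' y' - Gx x y) \<le> lam * norm (x' - x) + mu * norm (y' - y)"
    \<comment> \<open>(ii) y-derivatives up to order k exist (Dy j is the j-th order tensor)\<close>
    and Dy0: "\<And>x y. x \<in> X \<Longrightarrow> y \<in> Y \<Longrightarrow> Dy 0 x y [] = f x y"
    and Dy_deriv: "\<And>j x y vs. j < k \<Longrightarrow> x \<in> X \<Longrightarrow> y \<in> Y \<Longrightarrow> length vs = j \<Longrightarrow>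
          ((\<lambda>y'. Dy j x y' vs) has_derivative (\<lambda>h. Dy (Suc j) x y (h # vs))) (at y within Y)"
    and Dy_lip: "\<And>x x' y y'. x \<in> X \<Longrightarrow> x' \<in> X \<Longrightarrow> y \<in> Y \<Longrightarrow> y' \<in> Y \<Longrightarrow>
          ereal (tnorm k (\<lambda>vs. Dy k x' y' vs - Dy k x y vs))
            \<le> rho * ereal (norm (y' - y)) + ereal (sigma * norm (x' - x))"
    and Dy_ac: "\<And>y. y \<in> Y \<Longrightarrow> tensor_abs_cont_on X (\<lambda>x. Dy k x y)"
    \<comment> \<open>(iii) for k \<ge> 1\<close>
    and iii: "k \<ge> 1 \<Longrightarrow>
          (\<forall>x\<in>X. \<forall>y\<in>Y. \<forall>vs. length vs = k \<longrightarrow>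
              ((\<lambda>x'. Dy k x' y vs) has_derivative (\<lambda>u. Dxy x y u vs)) (at x within X))
        \<and> (\<forall>x\<in>X. \<forall>x'\<in>X. \<forall>y\<in>Y.
              tnorm_x k (\<lambda>u vs. Dxy x' y u vs - Dxy x y u vs) \<le> tau * norm (x' - x))
        \<and> {(x, y). x \<in> X \<and> y \<in> Y \<and>
              \<not> (\<forall>u vs. length vs = k \<longrightarrow> (\<lambda>x'. Dxy x' y u vs) differentiable (at x within X))}
            \<in> sets lebesgue
        \<and> (\<forall>x\<in>X. \<forall>vs. continuous_on Y (\<lambda>y. Dy k x y vs))"
    and xstar: "xstar \<in> X"
    and small: "norm (grad (moreau (\<lambda>x. SUP y\<in>Y. \<Sum>j\<le>k. Dy j x yhat (replicate j (y - yhat)) / fact j) X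
                   (2 * (lam + (if k \<ge> 1 then 2 * tau * D ^ k / fact k else 0)))) xstar) \<le> eps"
  shows "norm (grad (moreau (\<lambda>x. SUP y\<in>Y. f x y) X
                   (2 * (lam + (if k \<ge> 1 then 2 * tau * D ^ k / fact k else 0)))) xstar
             - grad (moreau (\<lambda>x. SUP y\<in>Y. \<Sum>j\<le>k. Dy j x yhat (replicate j (y - yhat)) / fact j) X
                   (2 * (lam + (if k \<ge> 1 then 2 * tau * D ^ k / fact k else 0)))) xstar)
         \<le> (if k \<ge> 1 then 4 * (mu * D + 2 * sigma * D ^ k / fact k + eps)
            else 4 * (min (mu * D) (2 * sigma) + eps))"
proof -
  interpret taylor_minimax f X Y D lam mu sigma tau rho k yhat Gx Dy Dxy
  proof
    show "((\<lambda>x'. Dy k x' y vs) has_derivative (\<lambda>u. Dxy x y u vs)) (at x within X)"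
      if "k \<ge> 1" "x \<in> X" "y \<in> Y" "length vs = k" for x y vs
      using iii that by blast
    show "tnorm_x k (\<lambda>u vs. Dxy x' y u vs - Dxy x y u vs) \<le> tau * norm (x' - x)"
      if "k \<ge> 1" "x \<in> X" "x' \<in> X" "y \<in> Y" for x x' y
      using iii that by blast
  qed (fact X Y D yhat nonneg Gx_deriv Gx_lip Dy0 Dy_deriv Dy_lip)+
  show ?thesis
    using grad_moreau_phi_minus_phi_hat_le[OF xstar small] .
qed

end
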